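(* Let $\sigma$ be $1$-Lipschitz and $\pi=\mathcal N(0,\rho_1^2\mathbf I_{D_0D_1})\otimes\mathcal N(0,\rho_2^2\mathbf I_{D_1D_2})$ with $\rho_1,\rho_2>0$; let $\beta>0$, $n\ge1$, and set $B_\ell=\rho_\ell\sqrt{2D_{\ell-1}D_\ell}$ for $\ell=1,2$. (i) If $|\sigma(u)|\le M_\sigma$ for all $u$, then $$\sup_{\bar w:\ \|\bar w_\ell\|_F\le B_\ell,\ \ell=1,2}\mathrm{Rem}_n(\bar w)\le\frac{\beta d}{n}\log\Big(3+\frac{3nB_2^2(B_1^2M_2^2+\mu(\mathcal X)M_\sigma^2)}{d\beta}\Big).$$ (ii) If $\sigma$ is unbounded but $\sigma(0)=0$, then $$\sup_{\bar w:\ \|\bar w_\ell\|_F\le B_\ell,\ \ell=1,2}\mathrm{Rem}_n(\bar w)\le\frac{\beta d}{n}\log\Big(3+\frac{3nB_1^2B_2^2(M_2^2+\bar M_2^2/D_1)}{d\beta}\Big).$$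
   Context: $\mathcal X\subset\mathbb R^{D_0}$ Borel, $\mu$ a $\sigma$-finite measure with $M_2^2=D_0^{-1}\int\|x\|_2^2\mu(dx)<\infty$, $\bar M_2^2=\|\int xx^\top\mu(dx)\|_{\mathrm{sp}}$, $\|f\|^2_{\mathbb L_2(\mu)}=\int\|f(x)\|_2^2\mu(dx)$. Parameters $w=(w_1,w_2)\in\mathsf W=\mathbb R^{D_0\times D_1}\times\mathbb R^{D_1\times D_2}$, $d=D_0D_1+D_1D_2$, $f_w(x)=w_2^\top\bar\sigma(w_1^\top x)$ with $\bar\sigma$ coordinatewise; $\|\cdot\|_F$ Frobenius norm. $\mathcal P_1(\mathcal F_{\mathsf W})$ is the set of probability measures $p$ on $\mathsf W$ with $\int\|f_w(x)\|_2p(dw)<\infty$ for all $x$, and $\mathrm{Rem}_n(\bar w)=\inf_{p\in\mathcal P_1(\mathcal F_{\mathsf W})}\{\int\|f_w-f_{\bar w}\|^2_{\mathbb L_2(\mu)}p(dw)+\frac{\beta}{n}D_{\mathrm{KL}}(p\|\pi)\}$. *)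

theory Defs
  imports "HOL-Probability.Probability"
begin

text \<open>Two-layer network f_w(x) = w2^T sigmabar(w1^T x), with
  w1 a D0 x D1 matrix (type real^'n1^'n0) and w2 a D1 x D2 matrix (real^'n2^'n1).\<close>

definition sigbar :: "(real \<Rightarrow> real) \<Rightarrow> real^'k \<Rightarrow> real^'k" where
  "sigbar \<sigma> z = (\<chi> j. \<sigma> (z $ j))"

definition fnet :: "(real \<Rightarrow> real) \<Rightarrow> (real^'n1^'n0) \<times> (real^'n2^'n1) \<Rightarrow> real^'n0 \<Rightarrow> real^'n2" where
  "fnet \<sigma> w x = transpose (snd w) *v sigbar \<sigma> (transpose (fst w) *v x)"

definition gauss_mat_density :: "real \<Rightarrow> real^'b^'a \<Rightarrow> real" where
  "gauss_mat_density \<rho> A = (\<Prod>i\<in>UNIV. \<Prod>j\<in>UNIV. normal_density 0 \<rho> (A $ i $ j))"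

definition gauss_prior :: "real \<Rightarrow> real \<Rightarrow> ((real^'n1^'n0) \<times> (real^'n2^'n1)) measure" where
  "gauss_prior \<rho>1 \<rho>2 = density lborel
     (\<lambda>w. ennreal (gauss_mat_density \<rho>1 (fst w) * gauss_mat_density \<rho>2 (snd w)))"

definition KL_div :: "'a measure \<Rightarrow> 'a measure \<Rightarrow> ennreal" where
  "KL_div p q = (if absolutely_continuous q p \<and> sets p = sets q
     then (\<integral>\<^sup>+ w. ennreal (let t = enn2real (RN_deriv q p w) in t * ln t - t + 1) \<partial>q)
     else \<infinity>)"

definition P1 :: "(real \<Rightarrow> real) \<Rightarrow> (real^'n0) set \<Rightarrow> ((real^'n1^'n0) \<times> (real^'n2^'n1)) measure set" where
  "P1 \<sigma> X = {p. prob_space p \<and> sets p = sets borel \<and>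
      (\<forall>x\<in>X. (\<integral>\<^sup>+ w. ennreal (norm (fnet \<sigma> w x)) \<partial>p) < \<infinity>)}"

definition L2dist_sq :: "(real^'n0) measure \<Rightarrow> (real \<Rightarrow> real)
    \<Rightarrow> (real^'n1^'n0) \<times> (real^'n2^'n1) \<Rightarrow> (real^'n1^'n0) \<times> (real^'n2^'n1) \<Rightarrow> ennreal" where
  "L2dist_sq \<mu> \<sigma> w w' = (\<integral>\<^sup>+ x. ennreal ((norm (fnet \<sigma> w x - fnet \<sigma> w' x))\<^sup>2) \<partial>\<mu>)"

definition Rem :: "real \<Rightarrow> nat \<Rightarrow> (real^'n0) set \<Rightarrow> (real^'n0) measure \<Rightarrow> (real \<Rightarrow> real)
    \<Rightarrow> ((real^'n1^'n0) \<times> (real^'n2^'n1)) measure \<Rightarrow> (real^'n1^'n0) \<times> (real^'n2^'n1) \<Rightarrow> ennreal" where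
  "Rem \<beta> n X \<mu> \<sigma> \<pi> wb = (INF p\<in>P1 \<sigma> X.
      (\<integral>\<^sup>+ w. L2dist_sq \<mu> \<sigma> w wb \<partial>p) + ennreal (\<beta> / real n) * KL_div p \<pi>)"

definition M2sq :: "(real^'n0) measure \<Rightarrow> real" where
  "M2sq \<mu> = enn2real (\<integral>\<^sup>+ x. ennreal ((norm x)\<^sup>2) \<partial>\<mu>) / real CARD('n0)"

definition outer :: "real^'n \<Rightarrow> real^'n^'n" where
  "outer x = (\<chi> i j. x $ i * x $ j)"

definition Mbar2sq :: "(real^'n0) measure \<Rightarrow> real" where
  "Mbar2sq \<mu> = onorm (\<lambda>v. (\<integral>x. outer x \<partial>\<mu>) *v v)"

end

theory Submission
  imports Defs
begin

(* For a target weight wb, the infimum defining Rem is bounded by its value at the Gaussian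
   N(wb, t diag(rho1^2, rho2^2)), i.e. the prior rescaled by t and recentred at wb.  Its KL
   divergence to the prior is d (t - 1 - ln t) / 2 + |wb1|^2 / (2 rho1^2) + |wb2|^2 / (2 rho2^2),
   which is at most d (t + 1 - ln t) / 2 on the ball |wb_l| <= B_l.  Writing
     f_w - f_wb = (w2 - wb2)^T sigma(w1^T x) + wb2^T (sigma(w1^T x) - sigma(wb1^T x))
   and using that sigma is 1-Lipschitz, Gaussian second moments bound the expected squared
   L2(mu) error by gamma t C: gamma = 1 and C = B2^2 (B1^2 M2^2 + mu(X) M_sigma^2) if sigma is
   bounded, gamma = 3/2 and C = B1^2 B2^2 (M2^2 + Mbar2^2 / D1) if sigma(0) = 0.  The choice
   t = 1 / (1 + 2 gamma n C / (d beta)) together with e^2 < 7.4 turns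
   gamma t C + (beta / n) d (t + 1 - ln t) / 2 into the stated logarithm. *)

lemma has_bochner_integral_lborel_prod:
  fixes f :: "'e::euclidean_space \<Rightarrow> real \<Rightarrow> real"
  assumes f: "\<And>b. b \<in> Basis \<Longrightarrow> has_bochner_integral lborel (f b) (I b)"
  shows "has_bochner_integral lborel (\<lambda>x. \<Prod>b\<in>Basis. f b (x \<bullet> b)) (\<Prod>b\<in>Basis. I b)"
proof -
  interpret product_sigma_finite "\<lambda>_::'e. lborel :: real measure"
    by (simp add: product_sigma_finite_def lborel.sigma_finite_measure_axioms)
  have int: "\<And>b. b \<in> Basis \<Longrightarrow> integrable lborel (f b)"
    and val: "\<And>b. b \<in> Basis \<Longrightarrow> integral\<^sup>L lborel (f b) = I b"
    using f by (auto simp: has_bochner_integral_iff)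
  have [measurable]: "\<And>b. b \<in> Basis \<Longrightarrow> f b \<in> borel_measurable borel"
    using int by (simp add: borel_measurable_integrable)
  have coords: "(\<Sum>c\<in>Basis. g c *\<^sub>R c) \<bullet> b = g b" if "b \<in> Basis" for g :: "'e \<Rightarrow> real" and b
    using that by (simp add: inner_sum_left inner_Basis if_distrib cong: if_cong)
  have "has_bochner_integral (\<Pi>\<^sub>M b\<in>Basis. lborel) (\<lambda>g. \<Prod>b\<in>Basis. f b (g b)) (\<Prod>b\<in>Basis. I b)"
    using product_integrable_prod[of Basis f] product_integral_prod[of Basis f] int val
    by (simp add: has_bochner_integral_iff)
  then have "has_bochner_integral (\<Pi>\<^sub>M b\<in>Basis. lborel)
      (\<lambda>g. \<Prod>b\<in>Basis. f b ((\<Sum>c\<in>Basis. g c *\<^sub>R c) \<bullet> b)) (\<Prod>b\<in>Basis. I b)"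
    by (simp add: coords cong: prod.cong)
  then show ?thesis
    by (subst lborel_eq) (rule has_bochner_integral_distr; measurable)
qed

lemma nn_integral_eq_has_bochner_integral:
  fixes f :: "'a \<Rightarrow> real"
  assumes "has_bochner_integral M f c" and "AE x in M. 0 \<le> f x"
  shows "(\<integral>\<^sup>+x. ennreal (f x) \<partial>M) = ennreal c"
  using assms nn_integral_eq_integral by (auto simp: has_bochner_integral_iff)

lemma measurable_restrict_borel:
  "sets M = sets (restrict_space borel X) \<Longrightarrow> f \<in> measurable borel N \<Longrightarrow> f \<in> measurable M N"
  by (subst measurable_cong_sets[OF _ refl], assumption) (rule measurable_restrict_space1)

section \<open>Gaussian measures with diagonal covariance\<close>

lemma ln_normal_density:
  "0 < \<sigma> \<Longrightarrow> ln (normal_density \<mu> \<sigma> x) = - ln \<sigma> - ln (sqrt (2 * pi)) - (x - \<mu>)\<^sup>2 / (2 * \<sigma>\<^sup>2)"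
  by (simp add: normal_density_def ln_mult ln_div real_sqrt_mult)

lemma has_bochner_integral_normal_moments:
  assumes "0 < \<sigma>"
  shows "has_bochner_integral lborel (normal_density \<mu> \<sigma>) 1"
    and "has_bochner_integral lborel (\<lambda>y. normal_density \<mu> \<sigma> y * (y - \<mu>)) 0"
    and "has_bochner_integral lborel (\<lambda>y. normal_density \<mu> \<sigma> y * (y - \<mu>)\<^sup>2) (\<sigma>\<^sup>2)"
  using assms normal_moment_odd[where k=0] normal_moment_even[where k=1]
  by (auto simp: has_bochner_integral_iff power2_eq_square)

definition gauss_density :: "'e::euclidean_space \<Rightarrow> ('e \<Rightarrow> real) \<Rightarrow> 'e \<Rightarrow> real" where
  "gauss_density m s w = (\<Prod>b\<in>Basis. normal_density (m \<bullet> b) (s b) (w \<bullet> b))"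

definition gauss_measure :: "'e::euclidean_space \<Rightarrow> ('e \<Rightarrow> real) \<Rightarrow> 'e measure" where
  "gauss_measure m s = density lborel (\<lambda>w. ennreal (gauss_density m s w))"

lemma gauss_density_nonneg: "0 \<le> gauss_density m s w"
  unfolding gauss_density_def by (intro prod_nonneg) auto

lemma gauss_density_pos: "(\<And>b. b \<in> Basis \<Longrightarrow> 0 < s b) \<Longrightarrow> 0 < gauss_density m s w"
  unfolding gauss_density_def by (intro prod_pos normal_density_pos) auto

lemma borel_measurable_gauss_density[measurable]: "gauss_density m s \<in> borel_measurable borel"
  unfolding gauss_density_def by measurable

lemma sets_gauss_measure[simp, measurable_cong]: "sets (gauss_measure m s) = sets borel"
  by (simp add: gauss_measure_def)

lemma space_gauss_measure[simp]: "space (gauss_measure m s) = UNIV"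
  by (simp add: gauss_measure_def)

context
  fixes m :: "'e::euclidean_space" and s :: "'e \<Rightarrow> real"
  assumes s_pos: "\<And>b. b \<in> Basis \<Longrightarrow> 0 < s b"
begin

lemma has_bochner_integral_gauss_density_prod:
  assumes "\<And>b. b \<in> Basis \<Longrightarrow>
    has_bochner_integral lborel (\<lambda>y. normal_density (m \<bullet> b) (s b) y * k b y) (I b)"
  shows "has_bochner_integral lborel
    (\<lambda>w. gauss_density m s w * (\<Prod>b\<in>Basis. k b (w \<bullet> b))) (\<Prod>b\<in>Basis. I b)"
  using has_bochner_integral_lborel_prod[of "\<lambda>b y. normal_density (m \<bullet> b) (s b) y * k b y", OF assms]
  by (simp add: gauss_density_def prod.distrib)

lemma has_bochner_integral_gauss_density: "has_bochner_integral lborel (gauss_density m s) 1"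
  using has_bochner_integral_gauss_density_prod[of "\<lambda>_ _. 1" "\<lambda>_. 1"]
    has_bochner_integral_normal_moments(1) s_pos
  by simp

lemma prob_space_gauss_measure: "prob_space (gauss_measure m s)"
proof
  have "emeasure (gauss_measure m s) UNIV = (\<integral>\<^sup>+w. ennreal (gauss_density m s w) \<partial>lborel)"
    by (simp add: gauss_measure_def emeasure_density)
  also have "\<dots> = 1"
    using nn_integral_eq_has_bochner_integral[OF has_bochner_integral_gauss_density]
    by (simp add: gauss_density_nonneg)
  finally show "emeasure (gauss_measure m s) (space (gauss_measure m s)) = 1" by simp
qed

lemma has_bochner_integral_gauss_measure_iff:
  assumes "f \<in> borel_measurable borel"
  shows "has_bochner_integral (gauss_measure m s) f c \<longleftrightarrow>
    has_bochner_integral lborel (\<lambda>w. gauss_density m s w * f w) c"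
  using assms
  by (simp add: gauss_measure_def has_bochner_integral_iff integrable_density integral_density
      gauss_density_nonneg)

lemma has_bochner_integral_gauss_measure_const:
  "has_bochner_integral (gauss_measure m s) (\<lambda>_. c) (c :: real)"
  using has_bochner_integral_mult_left[OF has_bochner_integral_gauss_density, of c]
  by (simp add: has_bochner_integral_gauss_measure_iff mult.commute)

lemma has_bochner_integral_gauss_measure_prod:
  assumes [measurable]: "\<And>b. b \<in> Basis \<Longrightarrow> k b \<in> borel_measurable borel"
    and "\<And>b. b \<in> Basis \<Longrightarrow>
      has_bochner_integral lborel (\<lambda>y. normal_density (m \<bullet> b) (s b) y * k b y) (I b)"
  shows "has_bochner_integral (gauss_measure m s) (\<lambda>w. \<Prod>b\<in>Basis. k b (w \<bullet> b)) (\<Prod>b\<in>Basis. I b)"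
  unfolding gauss_measure_def
  by (rule has_bochner_integral_density)
     (auto simp: gauss_density_nonneg intro: has_bochner_integral_gauss_density_prod[OF assms(2)])

lemma has_bochner_integral_gauss_centred:
  assumes b: "b \<in> Basis"
  shows "has_bochner_integral (gauss_measure m s) (\<lambda>w. w \<bullet> b - m \<bullet> b) 0"
proof -
  have "has_bochner_integral (gauss_measure m s)
      (\<lambda>w. \<Prod>c\<in>Basis. if c = b then w \<bullet> c - m \<bullet> c else 1) (\<Prod>c\<in>Basis. if c = b then 0 else 1)"
    using has_bochner_integral_normal_moments s_pos b
    by (intro has_bochner_integral_gauss_measure_prod) auto
  with b show ?thesis
    by (simp add: prod.delta' cong: if_cong)
qed

lemma has_bochner_integral_gauss_centred_product:
  assumes b: "b \<in> Basis" and c: "c \<in> Basis"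
  shows "has_bochner_integral (gauss_measure m s) (\<lambda>w. (w \<bullet> b - m \<bullet> b) * (w \<bullet> c - m \<bullet> c))
    (if b = c then (s b)\<^sup>2 else 0)"
proof -
  define k where "k a y = (if a = b then y - m \<bullet> b else 1) * (if a = c then y - m \<bullet> c else 1)"
    for a y
  define I where "I a = (if a = b \<and> a = c then (s a)\<^sup>2 else if a = b \<or> a = c then 0 else 1)" for a
  have "has_bochner_integral (gauss_measure m s) (\<lambda>w. \<Prod>a\<in>Basis. k a (w \<bullet> a)) (\<Prod>a\<in>Basis. I a)"
  proof (rule has_bochner_integral_gauss_measure_prod)
    fix a :: 'e assume a: "a \<in> Basis"
    show "has_bochner_integral lborel (\<lambda>y. normal_density (m \<bullet> a) (s a) y * k a y) (I a)"
      using has_bochner_integral_normal_moments[OF s_pos[OF a], of "m \<bullet> a"]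
      by (auto simp: k_def I_def power2_eq_square)
  qed (simp add: k_def)
  moreover have "(\<Prod>a\<in>Basis. k a (w \<bullet> a)) = (w \<bullet> b - m \<bullet> b) * (w \<bullet> c - m \<bullet> c)" for w
    using b c by (simp add: k_def prod.distrib prod.delta')
  moreover have "(\<Prod>a\<in>Basis. I a) = (if b = c then (s b)\<^sup>2 else 0)"
  proof (cases "b = c")
    case True
    with c show ?thesis by (simp add: I_def prod.delta' cong: if_cong)
  next
    case False
    with b show ?thesis by (simp add: I_def) (metis finite_Basis prod_zero)
  qed
  ultimately show ?thesis by simp
qed

lemma has_bochner_integral_gauss_log_ratio:
  assumes r_pos: "\<And>b. b \<in> Basis \<Longrightarrow> 0 < r b"
  shows "has_bochner_integral (gauss_measure m s)
    (\<lambda>w. ln (gauss_density m s w) - ln (gauss_density 0 r w))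
    (\<Sum>b\<in>Basis. ln (r b / s b) + ((s b)\<^sup>2 + (m \<bullet> b)\<^sup>2) / (2 * (r b)\<^sup>2) - 1 / 2)"
proof -
  define c where "c b = ln (r b / s b) + (m \<bullet> b)\<^sup>2 / (2 * (r b)\<^sup>2)" for b
  define \<alpha> where "\<alpha> b = 1 / (2 * (r b)\<^sup>2) - 1 / (2 * (s b)\<^sup>2)" for b
  define \<beta> where "\<beta> b = (m \<bullet> b) / (r b)\<^sup>2" for b
  have ln_ratio: "ln (gauss_density m s w) - ln (gauss_density 0 r w) = (\<Sum>b\<in>Basis.
      c b + \<alpha> b * ((w \<bullet> b - m \<bullet> b) * (w \<bullet> b - m \<bullet> b)) + \<beta> b * (w \<bullet> b - m \<bullet> b))" for w
  proof -
    have "ln (gauss_density m s w) - ln (gauss_density 0 r w) =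
        (\<Sum>b\<in>Basis. ln (normal_density (m \<bullet> b) (s b) (w \<bullet> b)) - ln (normal_density 0 (r b) (w \<bullet> b)))"
      unfolding gauss_density_def sum_subtractf using s_pos r_pos
      by (subst (1 2) ln_prod) (simp_all add: normal_density_pos[THEN less_imp_neq, symmetric])
    also have "\<dots> = (\<Sum>b\<in>Basis.
        c b + \<alpha> b * ((w \<bullet> b - m \<bullet> b) * (w \<bullet> b - m \<bullet> b)) + \<beta> b * (w \<bullet> b - m \<bullet> b))"
    proof (rule sum.cong[OF refl])
      fix b :: 'e assume b: "b \<in> Basis"
      show "ln (normal_density (m \<bullet> b) (s b) (w \<bullet> b)) - ln (normal_density 0 (r b) (w \<bullet> b)) =
          c b + \<alpha> b * ((w \<bullet> b - m \<bullet> b) * (w \<bullet> b - m \<bullet> b)) + \<beta> b * (w \<bullet> b - m \<bullet> b)"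
        using s_pos[OF b] r_pos[OF b] unfolding c_def \<alpha>_def \<beta>_def
        by (simp add: ln_normal_density ln_div field_simps power2_eq_square)
    qed
    finally show ?thesis .
  qed
  have "has_bochner_integral (gauss_measure m s) (\<lambda>w. \<Sum>b\<in>Basis.
      c b + \<alpha> b * ((w \<bullet> b - m \<bullet> b) * (w \<bullet> b - m \<bullet> b)) + \<beta> b * (w \<bullet> b - m \<bullet> b))
      (\<Sum>b\<in>Basis. c b + \<alpha> b * (s b)\<^sup>2 + \<beta> b * 0)"
    using has_bochner_integral_gauss_centred_product has_bochner_integral_gauss_centred
    by (intro has_bochner_integral_sum has_bochner_integral_add has_bochner_integral_mult_right
        has_bochner_integral_gauss_measure_const) fastforce+
  moreover have "c b + \<alpha> b * (s b)\<^sup>2 + \<beta> b * 0 =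
      ln (r b / s b) + ((s b)\<^sup>2 + (m \<bullet> b)\<^sup>2) / (2 * (r b)\<^sup>2) - 1 / 2" if "b \<in> Basis" for b
    using s_pos[OF that] r_pos[OF that] unfolding c_def \<alpha>_def by (simp add: field_simps)
  ultimately show ?thesis
    by (simp add: ln_ratio cong: sum.cong)
qed

end

lemma KL_div_density_lborel:
  fixes p q :: "'a::euclidean_space \<Rightarrow> real"
  assumes [measurable]: "p \<in> borel_measurable borel" "q \<in> borel_measurable borel"
    and p_pos: "\<And>w. 0 < p w" and q_pos: "\<And>w. 0 < q w"
    and Q: "sigma_finite_measure (density lborel q)"
    and int: "has_bochner_integral lborel (\<lambda>w. p w * (ln (p w) - ln (q w) - 1) + q w) c"
  shows "KL_div (density lborel p) (density lborel q) = ennreal c"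
proof -
  let ?P = "density lborel p" and ?Q = "density lborel q"
  define g where "g w = p w / q w" for w
  define \<phi> where "\<phi> t = t * ln t - t + 1" for t :: real
  have g_pos: "0 < g w" for w
    unfolding g_def using p_pos q_pos by simp
  have [measurable]: "g \<in> borel_measurable borel" "\<phi> \<in> borel_measurable borel"
    unfolding g_def \<phi>_def by measurable
  have \<phi>_nonneg: "0 \<le> \<phi> t" if "0 < t" for t
    using ln_le_minus_one[of "1 / t"] that by (simp add: \<phi>_def ln_div field_simps)
  have q_\<phi>: "q w * \<phi> (g w) = p w * (ln (p w) - ln (q w) - 1) + q w" for w
    unfolding \<phi>_def g_def using p_pos[of w] q_pos[of w] by (simp add: ln_div field_simps)
  have P_eq: "?P = density ?Q g"
    using p_pos q_pos
    by (subst density_density_eq) (auto simp: g_def ennreal_mult[symmetric] less_imp_le less_imp_neq[symmetric])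
  have RN: "AE w in ?Q. ennreal (g w) = RN_deriv ?Q ?P w"
    unfolding P_eq by (rule sigma_finite_measure.RN_deriv_unique[OF Q]) simp_all
  have "absolutely_continuous ?Q ?P"
    unfolding P_eq by (rule absolutely_continuousI_density) simp
  then have "KL_div ?P ?Q = (\<integral>\<^sup>+w. ennreal (\<phi> (g w)) \<partial>?Q)"
    unfolding KL_div_def \<phi>_def[symmetric]
  proof (simp add: Let_def, intro nn_integral_cong_AE)
    show "AE w in ?Q. ennreal (\<phi> (enn2real (RN_deriv ?Q ?P w))) = ennreal (\<phi> (g w))"
      using RN by eventually_elim (metis enn2real_ennreal g_pos less_imp_le)
  qed
  also have "\<dots> = (\<integral>\<^sup>+w. ennreal (q w * \<phi> (g w)) \<partial>lborel)"
    by (subst nn_integral_density)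
       (auto intro!: nn_integral_cong simp: ennreal_mult less_imp_le q_pos \<phi>_nonneg g_pos)
  also have "\<dots> = ennreal c"
    unfolding q_\<phi> using int
    by (rule nn_integral_eq_has_bochner_integral, unfold q_\<phi>[symmetric])
       (intro AE_I2 mult_nonneg_nonneg less_imp_le q_pos \<phi>_nonneg g_pos)
  finally show ?thesis .
qed

lemma KL_div_gauss_measure:
  fixes m :: "'e::euclidean_space"
  assumes s_pos: "\<And>b. b \<in> Basis \<Longrightarrow> 0 < s b" and r_pos: "\<And>b. b \<in> Basis \<Longrightarrow> 0 < r b"
  shows "KL_div (gauss_measure m s) (gauss_measure 0 r) =
    ennreal (\<Sum>b\<in>Basis. ln (r b / s b) + ((s b)\<^sup>2 + (m \<bullet> b)\<^sup>2) / (2 * (r b)\<^sup>2) - 1 / 2)"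
    (is "_ = ennreal ?KL")
proof -
  let ?p = "gauss_density m s" and ?q = "gauss_density 0 r"
  have "has_bochner_integral (gauss_measure m s) (\<lambda>w. ln (?p w) - ln (?q w) - 1) (?KL - 1)"
    by (rule has_bochner_integral_diff[OF
        has_bochner_integral_gauss_log_ratio[where s=s and r=r and m=m, OF s_pos r_pos]
        has_bochner_integral_gauss_measure_const[where s=s and m=m and c=1, OF s_pos]])
  then have "has_bochner_integral lborel (\<lambda>w. ?p w * (ln (?p w) - ln (?q w) - 1)) (?KL - 1)"
    by (subst (asm) has_bochner_integral_gauss_measure_iff) (simp_all add: s_pos)
  then have "has_bochner_integral lborel (\<lambda>w. ?p w * (ln (?p w) - ln (?q w) - 1) + ?q w) (?KL - 1 + 1)"
    by (intro has_bochner_integral_add has_bochner_integral_gauss_density r_pos)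
  then show ?thesis
    unfolding gauss_measure_def using s_pos r_pos
    by (intro KL_div_density_lborel)
       (simp_all add: gauss_density_pos prob_space_imp_sigma_finite
         prob_space_gauss_measure[unfolded gauss_measure_def])
qed

lemma inner_diff_eq_sum_Basis: "(x - y) \<bullet> a = (\<Sum>b\<in>Basis. (a \<bullet> b) * (x \<bullet> b - y \<bullet> b))"
  by (subst euclidean_inner) (simp add: inner_diff_left algebra_simps)

lemma power2_norm_eq_sum_Basis: "(norm x)\<^sup>2 = (\<Sum>b\<in>Basis. (x \<bullet> b)\<^sup>2)"
  unfolding power2_norm_eq_inner by (subst euclidean_inner) (simp add: power2_eq_square)

context
  fixes m :: "'e::euclidean_space" and s :: real
  assumes s_pos: "0 < s"
begin

lemma has_bochner_integral_gauss_centred_inner: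
  "has_bochner_integral (gauss_measure m (\<lambda>_. s)) (\<lambda>w. (w - m) \<bullet> a) 0"
proof -
  have "has_bochner_integral (gauss_measure m (\<lambda>_. s))
      (\<lambda>w. \<Sum>b\<in>Basis. (a \<bullet> b) * (w \<bullet> b - m \<bullet> b)) (\<Sum>b\<in>Basis. (a \<bullet> b) * 0)"
    using s_pos by (intro has_bochner_integral_sum has_bochner_integral_mult_right
        has_bochner_integral_gauss_centred) auto
  moreover have "(\<lambda>w. (w - m) \<bullet> a) = (\<lambda>w. \<Sum>b\<in>Basis. (a \<bullet> b) * (w \<bullet> b - m \<bullet> b))"
    by (simp only: inner_diff_eq_sum_Basis)
  ultimately show ?thesis by (simp only: mult_zero_right sum.neutral_const)
qed

lemma has_bochner_integral_gauss_centred_square: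
  "has_bochner_integral (gauss_measure m (\<lambda>_. s)) (\<lambda>w. ((w - m) \<bullet> a)\<^sup>2) (s\<^sup>2 * (norm a)\<^sup>2)"
proof -
  have "has_bochner_integral (gauss_measure m (\<lambda>_. s))
      (\<lambda>w. \<Sum>b\<in>Basis. \<Sum>c\<in>Basis. (a \<bullet> b) * (a \<bullet> c) * ((w \<bullet> b - m \<bullet> b) * (w \<bullet> c - m \<bullet> c)))
      (\<Sum>b\<in>Basis. \<Sum>c\<in>Basis. (a \<bullet> b) * (a \<bullet> c) * (if b = c then s\<^sup>2 else 0))"
    using s_pos by (intro has_bochner_integral_sum has_bochner_integral_mult_right
        has_bochner_integral_gauss_centred_product) auto
  moreover have "(\<lambda>w. ((w - m) \<bullet> a)\<^sup>2) = (\<lambda>w.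
      \<Sum>b\<in>Basis. \<Sum>c\<in>Basis. (a \<bullet> b) * (a \<bullet> c) * ((w \<bullet> b - m \<bullet> b) * (w \<bullet> c - m \<bullet> c)))"
    unfolding inner_diff_eq_sum_Basis power2_eq_square sum_product
    by (simp add: mult_ac)
  moreover have "(\<Sum>b\<in>Basis. \<Sum>c\<in>Basis. (a \<bullet> b) * (a \<bullet> c) * (if b = c then s\<^sup>2 else 0)) =
      s\<^sup>2 * (norm a)\<^sup>2"
    unfolding power2_norm_eq_sum_Basis[of a]
    by (simp add: if_distrib sum.delta sum_distrib_left power2_eq_square mult_ac cong: if_cong)
  ultimately show ?thesis by (simp only:)
qed

lemma has_bochner_integral_gauss_square:
  "has_bochner_integral (gauss_measure m (\<lambda>_. s)) (\<lambda>w. (w \<bullet> a)\<^sup>2) ((m \<bullet> a)\<^sup>2 + s\<^sup>2 * (norm a)\<^sup>2)"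
proof -
  have "has_bochner_integral (gauss_measure m (\<lambda>_. s))
      (\<lambda>w. ((w - m) \<bullet> a)\<^sup>2 + 2 * (m \<bullet> a) * ((w - m) \<bullet> a) + (m \<bullet> a)\<^sup>2)
      (s\<^sup>2 * (norm a)\<^sup>2 + 2 * (m \<bullet> a) * 0 + (m \<bullet> a)\<^sup>2)"
    using s_pos by (intro has_bochner_integral_add has_bochner_integral_mult_right
        has_bochner_integral_gauss_centred_square has_bochner_integral_gauss_centred_inner
        has_bochner_integral_gauss_measure_const) auto
  moreover have "(\<lambda>w. ((w - m) \<bullet> a)\<^sup>2 + 2 * (m \<bullet> a) * ((w - m) \<bullet> a) + (m \<bullet> a)\<^sup>2) =
      (\<lambda>w. (w \<bullet> a)\<^sup>2)"
    by (simp add: inner_diff_left power2_eq_square algebra_simps)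
  ultimately show ?thesis by (simp add: add.commute)
qed

end

section \<open>Gaussian random matrices\<close>

definition column_matrix :: "real^'r \<Rightarrow> 'c \<Rightarrow> real^'c^'r" where
  "column_matrix v j = (\<chi> i k. if k = j then v $ i else 0)"

lemma power2_norm_vec: "(norm (x :: 'a::real_inner^'n))\<^sup>2 = (\<Sum>i\<in>UNIV. (norm (x $ i))\<^sup>2)"
  unfolding power2_norm_eq_inner inner_vec_def ..

lemma transpose_mult_vec_nth: "(transpose (A :: real^'c^'r) *v v) $ j = (\<chi> i. A $ i $ j) \<bullet> v"
  by (simp add: transpose_def matrix_vector_mult_def inner_vec_def mult.commute)

lemma inner_column_matrix: "(A :: real^'c^'r) \<bullet> column_matrix v j = (\<chi> i. A $ i $ j) \<bullet> v"
  by (simp add: inner_vec_def column_matrix_def if_distrib cong: if_cong)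

lemma norm_column_matrix: "norm (column_matrix v j) = norm v"
proof -
  have "column_matrix v j $ i = v $ i *\<^sub>R axis j 1" for i
    by (simp add: column_matrix_def vec_eq_iff axis_def)
  then have "(norm (column_matrix v j))\<^sup>2 = (norm v)\<^sup>2"
    unfolding power2_norm_vec[of "column_matrix v j"] power2_norm_vec[of v] by simp
  then show ?thesis by (simp add: power2_eq_iff_nonneg)
qed

lemma sum_power2_norm_columns: "(\<Sum>j\<in>UNIV. (norm (\<chi> i. (A :: real^'c^'r) $ i $ j))\<^sup>2) = (norm A)\<^sup>2"
  by (simp add: power2_norm_vec[of A] power2_norm_vec[of "A $ _"] power2_norm_vec[of "\<chi> i. A $ i $ _"])
     (rule sum.swap)

lemma power2_norm_transpose_mult_vec:
  "(norm (transpose (A :: real^'c^'r) *v v))\<^sup>2 = (\<Sum>j\<in>UNIV. ((\<chi> i. A $ i $ j) \<bullet> v)\<^sup>2)"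
  unfolding power2_norm_vec transpose_mult_vec_nth by simp

lemma norm_transpose_mult_vec_le: "norm (transpose (A :: real^'c^'r) *v v) \<le> norm A * norm v"
proof -
  have "(norm (transpose A *v v))\<^sup>2 \<le> (\<Sum>j\<in>UNIV. (norm (\<chi> i. A $ i $ j))\<^sup>2 * (norm v)\<^sup>2)"
    unfolding power2_norm_transpose_mult_vec
  proof (rule sum_mono)
    fix j
    show "((\<chi> i. A $ i $ j) \<bullet> v)\<^sup>2 \<le> (norm (\<chi> i. A $ i $ j))\<^sup>2 * (norm v)\<^sup>2"
      using Cauchy_Schwarz_ineq2[of "\<chi> i. A $ i $ j" v]
      by (simp add: power_mult_distrib[symmetric] abs_le_square_iff[symmetric])
  qed
  also have "\<dots> = (norm A * norm v)\<^sup>2"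
    by (simp add: sum_distrib_right[symmetric] sum_power2_norm_columns power_mult_distrib)
  finally show ?thesis
    by (rule power2_le_imp_le) simp
qed

context
  fixes m :: "real^'c^'r" and s :: real
  assumes s_pos: "0 < s"
begin

lemma has_bochner_integral_gauss_matrix_centred:
  "has_bochner_integral (gauss_measure m (\<lambda>_. s)) (\<lambda>A. (norm (transpose (A - m) *v v))\<^sup>2)
    (real CARD('c) * s\<^sup>2 * (norm v)\<^sup>2)"
proof -
  have "has_bochner_integral (gauss_measure m (\<lambda>_. s))
      (\<lambda>A. \<Sum>j\<in>UNIV. ((A - m) \<bullet> column_matrix v j)\<^sup>2) (\<Sum>j\<in>(UNIV :: 'c set). s\<^sup>2 * (norm v)\<^sup>2)"
    using has_bochner_integral_gauss_centred_square[OF s_pos, where m=m and a="column_matrix v _"]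
    by (intro has_bochner_integral_sum) (simp add: norm_column_matrix)
  then show ?thesis
    unfolding power2_norm_transpose_mult_vec inner_column_matrix sum_constant by (simp add: mult.assoc)
qed

lemma has_bochner_integral_gauss_matrix:
  "has_bochner_integral (gauss_measure m (\<lambda>_. s)) (\<lambda>A. (norm (transpose A *v v))\<^sup>2)
    ((norm (transpose m *v v))\<^sup>2 + real CARD('c) * s\<^sup>2 * (norm v)\<^sup>2)"
proof -
  have "has_bochner_integral (gauss_measure m (\<lambda>_. s))
      (\<lambda>A. \<Sum>j\<in>UNIV. (A \<bullet> column_matrix v j)\<^sup>2)
      (\<Sum>j\<in>UNIV. (m \<bullet> column_matrix v j)\<^sup>2 + s\<^sup>2 * (norm v)\<^sup>2)"
    using has_bochner_integral_gauss_square[OF s_pos, where m=m and a="column_matrix v _"]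
    by (intro has_bochner_integral_sum) (simp add: norm_column_matrix)
  then show ?thesis
    unfolding power2_norm_transpose_mult_vec inner_column_matrix sum.distrib sum_constant
    by (simp add: mult.assoc)
qed

end

section \<open>The Gaussian prior on the weights\<close>

(* The basis vectors of the first factor are exactly those with second component 0. *)
definition pair_scale :: "real \<Rightarrow> real \<Rightarrow> 'a::euclidean_space \<times> 'b::euclidean_space \<Rightarrow> real" where
  "pair_scale r1 r2 b = (if snd b = 0 then r1 else r2)"

lemma prod_Basis_prod:
  "(\<Prod>b\<in>(Basis :: ('a::euclidean_space \<times> 'b::euclidean_space) set). f b) =
    (\<Prod>u\<in>Basis. f (u, 0)) * (\<Prod>v\<in>Basis. f (0, v))"
  unfolding Basis_prod_def
  by (subst prod.union_disjoint) (auto simp: prod.reindex inj_on_def dest: nonzero_Basis)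

lemma sum_Basis_prod:
  "(\<Sum>b\<in>(Basis :: ('a::euclidean_space \<times> 'b::euclidean_space) set). f b) =
    (\<Sum>u\<in>Basis. f (u, 0)) + (\<Sum>v\<in>Basis. f (0, v))"
  unfolding Basis_prod_def
  by (subst sum.union_disjoint) (auto simp: sum.reindex inj_on_def dest: nonzero_Basis)

lemma pair_scale_Basis:
  "u \<in> Basis \<Longrightarrow> pair_scale r1 r2 (u, 0) = r1" "v \<in> Basis \<Longrightarrow> pair_scale r1 r2 (0, v) = r2"
  by (auto simp: pair_scale_def dest: nonzero_Basis)

lemma pair_scale_pos: "0 < r1 \<Longrightarrow> 0 < r2 \<Longrightarrow> 0 < pair_scale r1 r2 b"
  by (simp add: pair_scale_def)

lemma gauss_density_pair_scale:
  "gauss_density m (pair_scale r1 r2) w =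
    gauss_density (fst m) (\<lambda>_. r1) (fst w) * gauss_density (snd m) (\<lambda>_. r2) (snd w)"
  unfolding gauss_density_def prod_Basis_prod by (simp add: inner_Pair_0 pair_scale_Basis)

lemma gauss_measure_pair_scale:
  assumes "0 < r1" "0 < r2"
  shows "gauss_measure m (pair_scale r1 r2) =
    gauss_measure (fst m) (\<lambda>_. r1) \<Otimes>\<^sub>M gauss_measure (snd m) (\<lambda>_. r2)"
proof -
  have "sigma_finite_measure (gauss_measure (snd m) (\<lambda>_. r2))"
    using assms by (simp add: prob_space_gauss_measure prob_space_imp_sigma_finite)
  then show ?thesis
    unfolding gauss_measure_def
    by (subst pair_measure_density)
       (simp_all add: lborel_prod gauss_density_pair_scale ennreal_mult' gauss_density_nonneg
         case_prod_unfold lborel.sigma_finite_measure_axioms)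
qed

lemma gauss_mat_density_eq: "gauss_mat_density \<rho> (A :: real^'b^'a) = gauss_density 0 (\<lambda>_. \<rho>) A"
proof -
  have "(\<Prod>b\<in>(Basis :: (real^'b^'a) set). f b) = (\<Prod>i\<in>UNIV. \<Prod>j\<in>UNIV. f (axis i (axis j 1)))"
    for f :: "real^'b^'a \<Rightarrow> real"
  proof -
    have Basis_eq: "(Basis :: (real^'b^'a) set) = (\<lambda>(i, j). axis i (axis j 1)) ` UNIV"
      by (auto simp: Basis_vec_def)
    have "inj (\<lambda>(i, j). axis i (axis j 1) :: real^'b^'a)"
      by (auto simp: inj_def axis_eq_axis)
    then show ?thesis
      unfolding Basis_eq
      by (subst prod.reindex) (simp_all add: prod.cartesian_product case_prod_beta' flip: UNIV_Times_UNIV)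
  qed
  then show ?thesis
    by (simp add: gauss_mat_density_def gauss_density_def inner_axis)
qed

lemma gauss_prior_eq_gauss_measure: "gauss_prior \<rho>1 \<rho>2 = gauss_measure 0 (pair_scale \<rho>1 \<rho>2)"
  by (simp add: gauss_prior_def gauss_measure_def gauss_density_pair_scale gauss_mat_density_eq)

lemma KL_div_gauss_rescaled:
  fixes m :: "'a::euclidean_space \<times> 'b::euclidean_space"
  assumes r: "0 < r1" "0 < r2" and t: "0 < t"
  shows "KL_div (gauss_measure m (pair_scale (sqrt t * r1) (sqrt t * r2))) (gauss_measure 0 (pair_scale r1 r2)) =
    ennreal (DIM('a \<times> 'b) * (t - 1 - ln t) / 2 + (norm (fst m))\<^sup>2 / (2 * r1\<^sup>2) + (norm (snd m))\<^sup>2 / (2 * r2\<^sup>2))"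
proof -
  have summand: "ln (r / (sqrt t * r)) + ((sqrt t * r)\<^sup>2 + x\<^sup>2) / (2 * r\<^sup>2) - 1 / 2 =
      (t - 1 - ln t) / 2 + x\<^sup>2 / (2 * r\<^sup>2)" if "0 < r" for r x :: real
    using that t by (simp add: ln_div ln_sqrt power_mult_distrib field_simps)
  have "KL_div (gauss_measure m (pair_scale (sqrt t * r1) (sqrt t * r2))) (gauss_measure 0 (pair_scale r1 r2)) =
    ennreal (\<Sum>b\<in>Basis. ln (pair_scale r1 r2 b / pair_scale (sqrt t * r1) (sqrt t * r2) b) +
      ((pair_scale (sqrt t * r1) (sqrt t * r2) b)\<^sup>2 + (m \<bullet> b)\<^sup>2) / (2 * (pair_scale r1 r2 b)\<^sup>2) - 1 / 2)"
    using r t by (intro KL_div_gauss_measure) (simp_all add: pair_scale_pos)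
  also have "\<dots> = ennreal ((\<Sum>u\<in>Basis. (t - 1 - ln t) / 2 + (fst m \<bullet> u)\<^sup>2 / (2 * r1\<^sup>2)) +
      (\<Sum>v\<in>Basis. (t - 1 - ln t) / 2 + (snd m \<bullet> v)\<^sup>2 / (2 * r2\<^sup>2)))"
    by (simp only: sum_Basis_prod pair_scale_Basis inner_Pair_0 summand r cong: sum.cong)
  also have "\<dots> = ennreal (DIM('a \<times> 'b) * (t - 1 - ln t) / 2 +
      (norm (fst m))\<^sup>2 / (2 * r1\<^sup>2) + (norm (snd m))\<^sup>2 / (2 * r2\<^sup>2))"
    by (simp add: sum.distrib sum_divide_distrib[symmetric] power2_norm_eq_sum_Basis[symmetric]
        add_divide_distrib[symmetric] algebra_simps)
  finally show ?thesis .
qed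

section \<open>Elementary bounds for the two-layer network\<close>

lemma continuous_on_nonexpansive:
  assumes "\<forall>u v. \<bar>\<sigma> u - \<sigma> v\<bar> \<le> \<bar>u - v\<bar>"
  shows "continuous_on S (\<sigma> :: real \<Rightarrow> real)"
  using assms by (intro lipschitz_on_continuous_on[where L=1] lipschitz_onI) (auto simp: dist_real_def)

lemma fnet_eq: "fnet \<sigma> w x = (\<chi> k. \<Sum>j\<in>UNIV. snd w $ j $ k * \<sigma> (\<Sum>i\<in>UNIV. fst w $ i $ j * x $ i))"
  by (simp add: fnet_def sigbar_def vec_eq_iff matrix_vector_mult_def transpose_def)

lemma continuous_on_fnet:
  assumes "continuous_on UNIV \<sigma>" "continuous_on S f" "continuous_on S g"
  shows "continuous_on S (\<lambda>z. fnet \<sigma> (f z) (g z))"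
  unfolding fnet_eq
  by (intro continuous_intros continuous_on_compose2[OF assms(1)] assms(2,3)) auto

lemma norm_sigbar_diff_le:
  assumes lip: "\<forall>u v. \<bar>\<sigma> u - \<sigma> v\<bar> \<le> \<bar>u - v\<bar>"
  shows "norm (sigbar \<sigma> a - sigbar \<sigma> (b :: real^'k)) \<le> norm (a - b)"
proof -
  have "(\<sigma> (a $ j) - \<sigma> (b $ j))\<^sup>2 \<le> (a $ j - b $ j)\<^sup>2" for j
    using lip by (simp add: abs_le_square_iff[symmetric])
  then have "(norm (sigbar \<sigma> a - sigbar \<sigma> b))\<^sup>2 \<le> (norm (a - b))\<^sup>2"
    by (simp add: power2_norm_vec sigbar_def sum_mono)
  then show ?thesis
    by (rule power2_le_imp_le) simp
qed

lemma norm_sigbar_le: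
  assumes "\<forall>u v. \<bar>\<sigma> u - \<sigma> v\<bar> \<le> \<bar>u - v\<bar>" and "\<sigma> 0 = 0"
  shows "norm (sigbar \<sigma> (a :: real^'k)) \<le> norm a"
proof -
  have "sigbar \<sigma> (0 :: real^'k) = 0"
    using assms(2) by (simp add: sigbar_def vec_eq_iff)
  then show ?thesis
    using norm_sigbar_diff_le[OF assms(1), of a 0] by simp
qed

lemma power2_norm_sigbar_le_bound:
  fixes M :: real
  assumes "\<forall>u. \<bar>\<sigma> u\<bar> \<le> M"
  shows "(norm (sigbar \<sigma> (z :: real^'k)))\<^sup>2 \<le> CARD('k) * M\<^sup>2"
proof -
  have "\<bar>\<sigma> (z $ j)\<bar>\<^sup>2 \<le> M\<^sup>2" for j
    using assms by (intro power_mono) auto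
  then have "(\<Sum>j\<in>UNIV. (\<sigma> (z $ j))\<^sup>2) \<le> (\<Sum>j\<in>(UNIV :: 'k set). M\<^sup>2)"
    by (intro sum_mono) simp
  then show ?thesis by (simp add: power2_norm_vec sigbar_def)
qed

lemma power2_norm_sigbar_le_growth:
  assumes "\<forall>u v. \<bar>\<sigma> u - \<sigma> v\<bar> \<le> \<bar>u - v\<bar>"
  shows "(norm (sigbar \<sigma> (z :: real^'k)))\<^sup>2 \<le> 2 * (norm (sigbar \<sigma> (0 :: real^'k)))\<^sup>2 + 2 * (norm z)\<^sup>2"
proof -
  have "norm (sigbar \<sigma> z) \<le> norm (sigbar \<sigma> (0 :: real^'k)) + norm z"
    using norm_sigbar_diff_le[OF assms, of z 0] norm_triangle_ineq2[of "sigbar \<sigma> z" "sigbar \<sigma> 0"]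
    by simp
  then have "(norm (sigbar \<sigma> z))\<^sup>2 \<le> (norm (sigbar \<sigma> (0 :: real^'k)) + norm z)\<^sup>2"
    by (simp add: power_mono)
  also have "\<dots> \<le> 2 * (norm (sigbar \<sigma> (0 :: real^'k)))\<^sup>2 + 2 * (norm z)\<^sup>2"
    using sum_squares_bound[of "norm (sigbar \<sigma> (0 :: real^'k))" "norm z"] unfolding power2_sum by linarith
  finally show ?thesis .
qed

lemma power2_norm_add_le: "(norm (a + b :: 'a::real_normed_vector))\<^sup>2 \<le> 2 * (norm a)\<^sup>2 + 2 * (norm b)\<^sup>2"
proof -
  have "(norm (a + b))\<^sup>2 \<le> (norm a + norm b)\<^sup>2"
    by (simp add: norm_triangle_ineq power_mono)
  also have "\<dots> \<le> 2 * (norm a)\<^sup>2 + 2 * (norm b)\<^sup>2"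
    using sum_squares_bound[of "norm a" "norm b"] unfolding power2_sum by linarith
  finally show ?thesis .
qed

lemma transpose_mult_vec_diff:
  "transpose A *v x - transpose B *v x = transpose (A - B) *v (x :: real^'r)"
  by (simp add: transpose_def matrix_vector_mult_def vec_eq_iff sum_subtractf left_diff_distrib)

lemma power2_norm_fnet_diff_le:
  assumes lip: "\<forall>u v. \<bar>\<sigma> u - \<sigma> v\<bar> \<le> \<bar>u - v\<bar>"
  shows "(norm (fnet \<sigma> w x - fnet \<sigma> m x))\<^sup>2 \<le>
    2 * (norm (transpose (snd w - snd m) *v sigbar \<sigma> (transpose (fst w) *v x)))\<^sup>2 +
    2 * (norm (snd m))\<^sup>2 * (norm (transpose (fst w - fst m) *v x))\<^sup>2"
proof -
  define u where "u = sigbar \<sigma> (transpose (fst w) *v x)"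
  define u0 where "u0 = sigbar \<sigma> (transpose (fst m) *v x)"
  have fnet_diff: "fnet \<sigma> w x - fnet \<sigma> m x = transpose (snd w - snd m) *v u + transpose (snd m) *v (u - u0)"
    by (simp add: fnet_def u_def u0_def transpose_def matrix_vector_mult_def vec_eq_iff
        sum_subtractf algebra_simps)
  have "norm (u - u0) \<le> norm (transpose (fst w - fst m) *v x)"
    unfolding u_def u0_def transpose_mult_vec_diff[symmetric] by (rule norm_sigbar_diff_le[OF lip])
  then have "norm (transpose (snd m) *v (u - u0)) \<le> norm (snd m) * norm (transpose (fst w - fst m) *v x)"
    by (meson mult_left_mono norm_ge_zero norm_transpose_mult_vec_le order_trans)
  then have "(norm (transpose (snd m) *v (u - u0)))\<^sup>2 \<le>
      (norm (snd m))\<^sup>2 * (norm (transpose (fst w - fst m) *v x))\<^sup>2"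
    unfolding power_mult_distrib[symmetric] by (rule power_mono) simp
  moreover have "(norm (fnet \<sigma> w x - fnet \<sigma> m x))\<^sup>2 \<le>
      2 * (norm (transpose (snd w - snd m) *v u))\<^sup>2 + 2 * (norm (transpose (snd m) *v (u - u0)))\<^sup>2"
    unfolding fnet_diff by (rule power2_norm_add_le)
  ultimately show ?thesis
    unfolding u_def by linarith
qed

section \<open>Risk of a Gaussian randomisation of the weights\<close>

lemma nn_integral_fnet_diff_gauss_le:
  fixes m :: "(real^'n1^'n0) \<times> (real^'n2^'n1)" and x :: "real^'n0" and s1 s2 K0 K1 :: real
  assumes lip: "\<forall>u v. \<bar>\<sigma> u - \<sigma> v\<bar> \<le> \<bar>u - v\<bar>" and s1: "0 < s1" and s2: "0 < s2"
    and growth: "\<And>z :: real^'n1. (norm (sigbar \<sigma> z))\<^sup>2 \<le> K0 + K1 * (norm z)\<^sup>2" and K1: "0 \<le> K1"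
  shows "(\<integral>\<^sup>+w. ennreal ((norm (fnet \<sigma> w x - fnet \<sigma> m x))\<^sup>2)
      \<partial>(gauss_measure (fst m) (\<lambda>_. s1) \<Otimes>\<^sub>M gauss_measure (snd m) (\<lambda>_. s2)))
    \<le> ennreal (2 * real CARD('n2) * s2\<^sup>2 * (K0 + K1 * ((norm (transpose (fst m) *v x))\<^sup>2 + real CARD('n1) * s1\<^sup>2 * (norm x)\<^sup>2))
      + 2 * (norm (snd m))\<^sup>2 * (real CARD('n1) * s1\<^sup>2 * (norm x)\<^sup>2))"
proof -
  let ?G1 = "gauss_measure (fst m) (\<lambda>_. s1)" and ?G2 = "gauss_measure (snd m) (\<lambda>_. s2)"
  interpret G2: prob_space ?G2 using s2 by (simp add: prob_space_gauss_measure)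
  have K0: "0 \<le> K0"
    using order_trans[OF zero_le_power2 growth[of 0]] by simp
  define u where "u w1 = sigbar \<sigma> (transpose w1 *v x)" for w1 :: "real^'n1^'n0"
  define B where "B w1 = (norm (snd m))\<^sup>2 * (norm (transpose (w1 - fst m) *v x))\<^sup>2" for w1 :: "real^'n1^'n0"
  define F where "F w = (norm (fnet \<sigma> w x - fnet \<sigma> m x))\<^sup>2" for w :: "(real^'n1^'n0) \<times> (real^'n2^'n1)"
  have "continuous_on UNIV F"
    unfolding F_def using continuous_on_nonexpansive[OF lip]
    by (intro continuous_intros continuous_on_fnet) auto
  then have [measurable]: "F \<in> borel_measurable borel"
    by (rule borel_measurable_continuous_onI)
  have "(\<lambda>w. ennreal (F w)) \<in> borel_measurable (?G1 \<Otimes>\<^sub>M ?G2)"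
    by (subst measurable_cong_sets[OF sets_pair_measure_cong[OF sets_gauss_measure sets_gauss_measure] refl])
       (simp add: borel_prod)
  then have "(\<integral>\<^sup>+w. ennreal (F w) \<partial>(?G1 \<Otimes>\<^sub>M ?G2)) = (\<integral>\<^sup>+w1. \<integral>\<^sup>+w2. ennreal (F (w1, w2)) \<partial>?G2 \<partial>?G1)"
    by (rule G2.nn_integral_fst[symmetric])
  also have "\<dots> \<le> (\<integral>\<^sup>+w1. \<integral>\<^sup>+w2. ennreal (2 * (norm (transpose (w2 - snd m) *v u w1))\<^sup>2 + 2 * B w1) \<partial>?G2 \<partial>?G1)"
  proof (intro nn_integral_mono ennreal_leI)
    fix w1 w2
    show "F (w1, w2) \<le> 2 * (norm (transpose (w2 - snd m) *v u w1))\<^sup>2 + 2 * B w1"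
      using power2_norm_fnet_diff_le[OF lip, where w="(w1, w2)" and x=x and m=m]
      by (simp add: F_def u_def B_def mult.assoc)
  qed
  also have "\<dots> = (\<integral>\<^sup>+w1. ennreal (2 * (real CARD('n2) * s2\<^sup>2 * (norm (u w1))\<^sup>2) + 2 * B w1) \<partial>?G1)"
    using s2 by (intro nn_integral_cong nn_integral_eq_has_bochner_integral has_bochner_integral_add
        has_bochner_integral_mult_right has_bochner_integral_gauss_matrix_centred
        has_bochner_integral_gauss_measure_const) (auto simp: B_def)
  also have "\<dots> \<le> (\<integral>\<^sup>+w1. ennreal (2 * real CARD('n2) * s2\<^sup>2 * K0 + 2 * real CARD('n2) * s2\<^sup>2 * K1 * (norm (transpose w1 *v x))\<^sup>2
      + 2 * (norm (snd m))\<^sup>2 * (norm (transpose (w1 - fst m) *v x))\<^sup>2) \<partial>?G1)"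
  proof (intro nn_integral_mono ennreal_leI)
    fix w1
    have "2 * (real CARD('n2) * s2\<^sup>2 * (norm (u w1))\<^sup>2) \<le> 2 * (real CARD('n2) * s2\<^sup>2 * (K0 + K1 * (norm (transpose w1 *v x))\<^sup>2))"
      unfolding u_def by (intro mult_left_mono growth) auto
    then show "2 * (real CARD('n2) * s2\<^sup>2 * (norm (u w1))\<^sup>2) + 2 * B w1 \<le> 2 * real CARD('n2) * s2\<^sup>2 * K0
        + 2 * real CARD('n2) * s2\<^sup>2 * K1 * (norm (transpose w1 *v x))\<^sup>2 + 2 * (norm (snd m))\<^sup>2 * (norm (transpose (w1 - fst m) *v x))\<^sup>2"
      by (simp add: B_def algebra_simps)
  qed
  also have "\<dots> = ennreal (2 * real CARD('n2) * s2\<^sup>2 * K0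
      + 2 * real CARD('n2) * s2\<^sup>2 * K1 * ((norm (transpose (fst m) *v x))\<^sup>2 + real CARD('n1) * s1\<^sup>2 * (norm x)\<^sup>2)
      + 2 * (norm (snd m))\<^sup>2 * (real CARD('n1) * s1\<^sup>2 * (norm x)\<^sup>2))"
    using s1 s2 K0 K1
    by (intro nn_integral_eq_has_bochner_integral has_bochner_integral_add
        has_bochner_integral_mult_right has_bochner_integral_gauss_matrix_centred
        has_bochner_integral_gauss_matrix has_bochner_integral_gauss_measure_const)
       (auto intro!: AE_I2 add_nonneg_nonneg mult_nonneg_nonneg)
  finally show ?thesis
    unfolding F_def by (simp add: algebra_simps)
qed

lemma gauss_measure_pair_scale_in_P1:
  fixes m :: "(real^'n1^'n0) \<times> (real^'n2^'n1)"
  assumes lip: "\<forall>u v. \<bar>\<sigma> u - \<sigma> v\<bar> \<le> \<bar>u - v\<bar>" and s: "0 < s1" "0 < s2"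
  shows "gauss_measure m (pair_scale s1 s2) \<in> P1 \<sigma> X"
  unfolding P1_def
proof (intro CollectI conjI ballI)
  let ?P = "gauss_measure m (pair_scale s1 s2)"
  show "prob_space ?P"
    using s by (intro prob_space_gauss_measure pair_scale_pos)
  then interpret prob_space ?P .
  show "sets ?P = sets borel" by simp
  fix x :: "real^'n0"
  define c where "c = 2 * (norm (sigbar \<sigma> (0 :: real^'n1)))\<^sup>2"
  have "continuous_on UNIV (\<lambda>w. (norm (fnet \<sigma> w x - fnet \<sigma> m x))\<^sup>2)"
    using continuous_on_nonexpansive[OF lip] by (intro continuous_intros continuous_on_fnet) auto
  then have [measurable]: "(\<lambda>w. (norm (fnet \<sigma> w x - fnet \<sigma> m x))\<^sup>2) \<in> borel_measurable borel"
    by (rule borel_measurable_continuous_onI)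
  have "norm (fnet \<sigma> w x) \<le> (norm (fnet \<sigma> m x) + 1) + (norm (fnet \<sigma> w x - fnet \<sigma> m x))\<^sup>2" for w
  proof -
    have "norm (fnet \<sigma> w x - fnet \<sigma> m x) \<le> 1 + (norm (fnet \<sigma> w x - fnet \<sigma> m x))\<^sup>2"
      using zero_le_power2[of "norm (fnet \<sigma> w x - fnet \<sigma> m x) - 1"] norm_ge_zero[of "fnet \<sigma> w x - fnet \<sigma> m x"]
      unfolding power2_diff power_one mult_1_right by linarith
    then show ?thesis
      using norm_triangle_ineq2[of "fnet \<sigma> w x" "fnet \<sigma> m x"] by linarith
  qed
  then have "(\<integral>\<^sup>+w. ennreal (norm (fnet \<sigma> w x)) \<partial>?P) \<le>
      (\<integral>\<^sup>+w. ennreal (norm (fnet \<sigma> m x) + 1) + ennreal ((norm (fnet \<sigma> w x - fnet \<sigma> m x))\<^sup>2) \<partial>?P)"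
    by (intro nn_integral_mono) (simp add: ennreal_plus[symmetric] del: ennreal_plus)
  also have "\<dots> = ennreal (norm (fnet \<sigma> m x) + 1) +
      (\<integral>\<^sup>+w. ennreal ((norm (fnet \<sigma> w x - fnet \<sigma> m x))\<^sup>2) \<partial>?P)"
    using emeasure_space_1 by (simp add: nn_integral_add)
  also have "(\<integral>\<^sup>+w. ennreal ((norm (fnet \<sigma> w x - fnet \<sigma> m x))\<^sup>2) \<partial>?P) \<le> ennreal
      (2 * real CARD('n2) * s2\<^sup>2 * (c + 2 * ((norm (transpose (fst m) *v x))\<^sup>2 + real CARD('n1) * s1\<^sup>2 * (norm x)\<^sup>2))
        + 2 * (norm (snd m))\<^sup>2 * (real CARD('n1) * s1\<^sup>2 * (norm x)\<^sup>2))"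
    unfolding gauss_measure_pair_scale[OF s] c_def
    by (rule nn_integral_fnet_diff_gauss_le[OF lip s power2_norm_sigbar_le_growth[OF lip]]) simp
  finally show "(\<integral>\<^sup>+w. ennreal (norm (fnet \<sigma> w x)) \<partial>?P) < \<infinity>"
    by (simp add: le_less_trans)
qed

lemma nn_integral_L2dist_sq_gauss_le:
  fixes m :: "(real^'n1^'n0) \<times> (real^'n2^'n1)" and \<mu> :: "(real^'n0) measure" and s1 s2 K0 K1 :: real
  assumes lip: "\<forall>u v. \<bar>\<sigma> u - \<sigma> v\<bar> \<le> \<bar>u - v\<bar>"
    and \<mu>_sets: "sets \<mu> = sets (restrict_space borel X)" and \<mu>_sfin: "sigma_finite_measure \<mu>"
    and s: "0 < s1" "0 < s2"
    and growth: "\<And>z :: real^'n1. (norm (sigbar \<sigma> z))\<^sup>2 \<le> K0 + K1 * (norm z)\<^sup>2" and K1: "0 \<le> K1"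
  shows "(\<integral>\<^sup>+w. L2dist_sq \<mu> \<sigma> w m \<partial>gauss_measure m (pair_scale s1 s2))
    \<le> (\<integral>\<^sup>+x. ennreal (2 * real CARD('n2) * s2\<^sup>2 * (K0 + K1 * ((norm (transpose (fst m) *v x))\<^sup>2
          + real CARD('n1) * s1\<^sup>2 * (norm x)\<^sup>2)) + 2 * (norm (snd m))\<^sup>2 * (real CARD('n1) * s1\<^sup>2 * (norm x)\<^sup>2)) \<partial>\<mu>)"
proof -
  let ?P = "gauss_measure m (pair_scale s1 s2)"
  define F where "F z = ennreal ((norm (fnet \<sigma> (snd z) (fst z) - fnet \<sigma> m (fst z)))\<^sup>2)"
    for z :: "(real^'n0) \<times> (real^'n1^'n0) \<times> (real^'n2^'n1)"
  interpret P: prob_space ?P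
    using s by (intro prob_space_gauss_measure pair_scale_pos)
  interpret pair_sigma_finite \<mu> ?P
    using \<mu>_sfin P.sigma_finite_measure_axioms by (rule pair_sigma_finite.intro)
  have "continuous_on UNIV (\<lambda>z::(real^'n0) \<times> (real^'n1^'n0) \<times> (real^'n2^'n1).
      (norm (fnet \<sigma> (snd z) (fst z) - fnet \<sigma> m (fst z)))\<^sup>2)"
    using continuous_on_nonexpansive[OF lip] by (intro continuous_intros continuous_on_fnet) auto
  then have [measurable]: "(\<lambda>z::(real^'n0) \<times> (real^'n1^'n0) \<times> (real^'n2^'n1).
      (norm (fnet \<sigma> (snd z) (fst z) - fnet \<sigma> m (fst z)))\<^sup>2) \<in> borel_measurable borel"
    by (rule borel_measurable_continuous_onI)
  have F_borel: "F \<in> borel_measurable (borel \<Otimes>\<^sub>M borel)"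
    unfolding F_def borel_prod by measurable
  have id_meas: "(\<lambda>z. z) \<in> measurable (\<mu> \<Otimes>\<^sub>M ?P) (borel \<Otimes>\<^sub>M borel)"
  proof (rule measurable_pair)
    have "(\<lambda>x. x) \<in> measurable \<mu> borel"
      by (rule measurable_restrict_borel[OF \<mu>_sets]) simp
    then show "fst \<circ> (\<lambda>z. z) \<in> measurable (\<mu> \<Otimes>\<^sub>M ?P) borel"
      by (simp add: comp_def)
    show "snd \<circ> (\<lambda>z. z) \<in> measurable (\<mu> \<Otimes>\<^sub>M ?P) borel"
      by (simp add: comp_def measurable_cong_sets[OF refl sets_gauss_measure[symmetric]])
  qed
  have F_meas: "(\<lambda>(x, w). F (x, w)) \<in> borel_measurable (\<mu> \<Otimes>\<^sub>M ?P)"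
    using measurable_compose[OF id_meas F_borel] by simp
  have "(\<integral>\<^sup>+w. L2dist_sq \<mu> \<sigma> w m \<partial>?P) = (\<integral>\<^sup>+w. \<integral>\<^sup>+x. F (x, w) \<partial>\<mu> \<partial>?P)"
    by (simp add: L2dist_sq_def F_def)
  also have "\<dots> = (\<integral>\<^sup>+x. \<integral>\<^sup>+w. F (x, w) \<partial>?P \<partial>\<mu>)"
    by (rule Fubini'[OF F_meas])
  also have "\<dots> \<le> (\<integral>\<^sup>+x. ennreal (2 * real CARD('n2) * s2\<^sup>2 * (K0 + K1 * ((norm (transpose (fst m) *v x))\<^sup>2
          + real CARD('n1) * s1\<^sup>2 * (norm x)\<^sup>2)) + 2 * (norm (snd m))\<^sup>2 * (real CARD('n1) * s1\<^sup>2 * (norm x)\<^sup>2)) \<partial>\<mu>)"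
    unfolding F_def gauss_measure_pair_scale[OF s]
    by (intro nn_integral_mono) (simp only: prod.sel nn_integral_fnet_diff_gauss_le[OF lip s growth K1])
  finally show ?thesis .
qed

section \<open>Second moments of the input distribution\<close>

lemma norm_outer: "norm (outer (x :: real^'n)) = (norm x)\<^sup>2"
proof -
  have "(norm (outer x))\<^sup>2 = (\<Sum>i\<in>UNIV. \<Sum>j\<in>UNIV. (x $ i)\<^sup>2 * (x $ j)\<^sup>2)"
    by (simp add: power2_norm_vec outer_def power_mult_distrib)
  also have "\<dots> = ((norm x)\<^sup>2)\<^sup>2"
    unfolding power2_norm_vec[of x] by (simp add: sum_product[symmetric] power2_eq_square)
  finally show ?thesis
    by (subst power2_eq_iff_nonneg[symmetric]) auto
qed

lemma inner_outer_mult_vec: "c \<bullet> (outer x *v c) = (c \<bullet> (x :: real^'n))\<^sup>2"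
  by (simp add: inner_vec_def matrix_vector_mult_def outer_def power2_eq_square sum_product
      sum_distrib_left mult_ac)

lemma bounded_linear_quadratic_form: "bounded_linear (\<lambda>M :: real^'n^'n. c \<bullet> (M *v c))"
proof -
  have "linear (\<lambda>M :: real^'n^'n. c \<bullet> (M *v c))"
    by (rule linearI) (simp_all add: matrix_vector_mult_add_rdistrib inner_add_right
        matrix_vector_mult_def inner_vec_def sum_distrib_left sum.distrib algebra_simps)
  then show ?thesis by (simp add: linear_conv_bounded_linear)
qed

lemma M2sq_nonneg: "0 \<le> M2sq \<mu>"
  by (simp add: M2sq_def)

lemma Mbar2sq_nonneg: "0 \<le> Mbar2sq \<mu>"
  unfolding Mbar2sq_def by (rule onorm_pos_le) simp

context
  fixes \<mu> :: "(real^'n0) measure" and X :: "(real^'n0) set"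
  assumes \<mu>_sets: "sets \<mu> = sets (restrict_space borel X)"
    and M2_fin: "(\<integral>\<^sup>+x. ennreal ((norm x)\<^sup>2) \<partial>\<mu>) < \<infinity>"
begin

lemma integrable_power2_norm: "integrable \<mu> (\<lambda>x. (norm x)\<^sup>2)"
  using M2_fin by (intro integrableI_nonneg measurable_restrict_borel[OF \<mu>_sets]) auto

lemma nn_integral_power2_norm: "(\<integral>\<^sup>+x. ennreal ((norm x)\<^sup>2) \<partial>\<mu>) = ennreal (real CARD('n0) * M2sq \<mu>)"
  using M2_fin by (simp add: M2sq_def less_top)

lemma integrable_outer: "integrable \<mu> outer"
proof (rule Bochner_Integration.integrable_bound[OF integrable_power2_norm])
  have "outer \<in> borel_measurable (borel :: (real^'n0) measure)"
    by (rule borel_measurable_continuous_onI) (unfold outer_def, intro continuous_intros)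
  then show "outer \<in> borel_measurable \<mu>"
    by (rule measurable_restrict_borel[OF \<mu>_sets])
qed (simp add: norm_outer)

lemma integrable_inner_square: "integrable \<mu> (\<lambda>x. (c \<bullet> x)\<^sup>2)"
  using integrable_bounded_linear[OF bounded_linear_quadratic_form integrable_outer, of c]
  by (simp add: inner_outer_mult_vec)

lemma integral_inner_square_le: "(\<integral>x. (c \<bullet> x)\<^sup>2 \<partial>\<mu>) \<le> Mbar2sq \<mu> * (norm c)\<^sup>2"
proof -
  have "(\<integral>x. (c \<bullet> x)\<^sup>2 \<partial>\<mu>) = c \<bullet> ((\<integral>x. outer x \<partial>\<mu>) *v c)"
    using integral_bounded_linear[OF bounded_linear_quadratic_form integrable_outer, of c]
    by (simp add: inner_outer_mult_vec)
  also have "\<dots> \<le> norm c * (Mbar2sq \<mu> * norm c)"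
    unfolding Mbar2sq_def
    by (intro order_trans[OF norm_cauchy_schwarz] mult_left_mono onorm) auto
  finally show ?thesis
    by (simp add: power2_eq_square mult_ac)
qed

lemma nn_integral_power2_norm_transpose_le:
  "(\<integral>\<^sup>+x. ennreal ((norm (transpose (A :: real^'n1^'n0) *v x))\<^sup>2) \<partial>\<mu>) \<le> ennreal (Mbar2sq \<mu> * (norm A)\<^sup>2)"
proof -
  have "(\<integral>\<^sup>+x. ennreal ((norm (transpose A *v x))\<^sup>2) \<partial>\<mu>) =
      ennreal (\<integral>x. (\<Sum>j\<in>UNIV. ((\<chi> i. A $ i $ j) \<bullet> x)\<^sup>2) \<partial>\<mu>)"
    unfolding power2_norm_transpose_mult_vec
    using integrable_inner_square by (intro nn_integral_eq_integral) (auto intro!: sum_nonneg)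
  also have "\<dots> \<le> ennreal (\<Sum>j\<in>UNIV. Mbar2sq \<mu> * (norm (\<chi> i. A $ i $ j))\<^sup>2)"
    using integrable_inner_square integral_inner_square_le by (intro ennreal_leI) (simp add: sum_mono)
  also have "\<dots> = ennreal (Mbar2sq \<mu> * (norm A)\<^sup>2)"
    by (simp add: sum_distrib_left[symmetric] sum_power2_norm_columns)
  finally show ?thesis .
qed

(* The constant term stays in ennreal, so that a = 0 gives a finite bound even if mu X is infinite. *)
lemma nn_integral_quadratic_le:
  fixes A :: "real^'n1^'n0"
  assumes "0 \<le> a" "0 \<le> b" "0 \<le> c"
  shows "(\<integral>\<^sup>+x. ennreal (a + b * (norm (transpose A *v x))\<^sup>2 + c * (norm x)\<^sup>2) \<partial>\<mu>) \<le>
    ennreal a * emeasure \<mu> X + ennreal (b * (Mbar2sq \<mu> * (norm A)\<^sup>2) + c * (real CARD('n0) * M2sq \<mu>))"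
proof -
  define q where "q x = (norm (transpose A *v x))\<^sup>2" for x
  have space: "space \<mu> = X"
    using sets_eq_imp_space_eq[OF \<mu>_sets] by (simp add: space_restrict_space)
  have [measurable]: "q \<in> borel_measurable \<mu>" "(\<lambda>x. (norm x)\<^sup>2) \<in> borel_measurable \<mu>"
    unfolding q_def by (intro measurable_restrict_borel[OF \<mu>_sets] borel_measurable_continuous_onI continuous_intros)+
  have "(\<integral>\<^sup>+x. ennreal (a + b * q x + c * (norm x)\<^sup>2) \<partial>\<mu>) =
      (\<integral>\<^sup>+x. ennreal a + ennreal b * ennreal (q x) + ennreal c * ennreal ((norm x)\<^sup>2) \<partial>\<mu>)"
    using assms by (intro nn_integral_cong) (simp add: ennreal_plus ennreal_mult q_def)
  also have "\<dots> = ennreal a * emeasure \<mu> X + ennreal b * (\<integral>\<^sup>+x. ennreal (q x) \<partial>\<mu>)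
      + ennreal c * (\<integral>\<^sup>+x. ennreal ((norm x)\<^sup>2) \<partial>\<mu>)"
    by (simp add: nn_integral_add nn_integral_cmult space)
  also have "\<dots> \<le> ennreal a * emeasure \<mu> X + ennreal b * ennreal (Mbar2sq \<mu> * (norm A)\<^sup>2)
      + ennreal c * ennreal (real CARD('n0) * M2sq \<mu>)"
    unfolding q_def
    by (intro add_mono mult_left_mono order_refl nn_integral_power2_norm_transpose_le)
       (simp_all add: nn_integral_power2_norm)
  also have "\<dots> = ennreal a * emeasure \<mu> X + ennreal (b * (Mbar2sq \<mu> * (norm A)\<^sup>2) + c * (real CARD('n0) * M2sq \<mu>))"
    using assms by (simp add: ennreal_plus ennreal_mult' add.assoc Mbar2sq_nonneg M2sq_nonneg)
  finally show ?thesis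
    by (simp only: q_def)
qed

end

section \<open>The PAC-Bayesian remainder\<close>

lemma power2_mult_sqrt: "0 \<le> x \<Longrightarrow> (\<rho> * sqrt x)\<^sup>2 = \<rho>\<^sup>2 * x"
  by (simp add: power_mult_distrib)

lemma power2_le_of_le_mult_sqrt: "0 \<le> y \<Longrightarrow> y \<le> \<rho> * sqrt x \<Longrightarrow> 0 \<le> x \<Longrightarrow> y\<^sup>2 \<le> \<rho>\<^sup>2 * x"
  using power_mono[of y "\<rho> * sqrt x" 2] by (simp add: power2_mult_sqrt)

lemma Rem_le_gauss_posterior:
  fixes wb :: "(real^'n1^'n0) \<times> (real^'n2^'n1)"
  assumes lip: "\<forall>u v. \<bar>\<sigma> u - \<sigma> v\<bar> \<le> \<bar>u - v\<bar>" and r: "0 < \<rho>1" "0 < \<rho>2" and t: "0 < t"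
  shows "Rem \<beta> n X \<mu> \<sigma> (gauss_prior \<rho>1 \<rho>2) wb \<le>
    (\<integral>\<^sup>+w. L2dist_sq \<mu> \<sigma> w wb \<partial>gauss_measure wb (pair_scale (sqrt t * \<rho>1) (sqrt t * \<rho>2)))
    + ennreal (\<beta> / real n) * ennreal (DIM((real^'n1^'n0) \<times> (real^'n2^'n1)) * (t - 1 - ln t) / 2
        + (norm (fst wb))\<^sup>2 / (2 * \<rho>1\<^sup>2) + (norm (snd wb))\<^sup>2 / (2 * \<rho>2\<^sup>2))"
proof -
  have "gauss_measure wb (pair_scale (sqrt t * \<rho>1) (sqrt t * \<rho>2)) \<in> P1 \<sigma> X"
    using r t by (intro gauss_measure_pair_scale_in_P1 lip) auto
  then show ?thesis
    unfolding Rem_def gauss_prior_eq_gauss_measure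
    by (rule order_trans[OF INF_lower]) (simp add: KL_div_gauss_rescaled[OF r t])
qed

lemma Rem_le_gauss_posterior_on_ball:
  fixes wb :: "(real^'n1^'n0) \<times> (real^'n2^'n1)"
  defines "d \<equiv> real CARD('n0) * real CARD('n1) + real CARD('n1) * real CARD('n2)"
  assumes lip: "\<forall>u v. \<bar>\<sigma> u - \<sigma> v\<bar> \<le> \<bar>u - v\<bar>" and r: "0 < \<rho>1" "0 < \<rho>2" and t: "0 < t"
    and w1: "norm (fst wb) \<le> \<rho>1 * sqrt (2 * real CARD('n0) * real CARD('n1))"
    and w2: "norm (snd wb) \<le> \<rho>2 * sqrt (2 * real CARD('n1) * real CARD('n2))"
  shows "Rem \<beta> n X \<mu> \<sigma> (gauss_prior \<rho>1 \<rho>2) wb \<le>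
    (\<integral>\<^sup>+w. L2dist_sq \<mu> \<sigma> w wb \<partial>gauss_measure wb (pair_scale (sqrt t * \<rho>1) (sqrt t * \<rho>2)))
    + ennreal (\<beta> / real n) * ennreal (d * (t + 1 - ln t) / 2)"
proof -
  have "(norm (fst wb))\<^sup>2 / (2 * \<rho>1\<^sup>2) \<le> real CARD('n0) * real CARD('n1)"
    using power2_le_of_le_mult_sqrt[OF norm_ge_zero w1] r by (simp add: field_simps)
  moreover have "(norm (snd wb))\<^sup>2 / (2 * \<rho>2\<^sup>2) \<le> real CARD('n1) * real CARD('n2)"
    using power2_le_of_le_mult_sqrt[OF norm_ge_zero w2] r by (simp add: field_simps)
  moreover have "d * (t + 1 - ln t) / 2 = d * (t - 1 - ln t) / 2 + d"
    by (simp add: field_simps)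
  moreover have dim: "real DIM((real^'n1^'n0) \<times> (real^'n2^'n1)) = d"
    by (simp add: d_def)
  ultimately have "DIM((real^'n1^'n0) \<times> (real^'n2^'n1)) * (t - 1 - ln t) / 2
      + (norm (fst wb))\<^sup>2 / (2 * \<rho>1\<^sup>2) + (norm (snd wb))\<^sup>2 / (2 * \<rho>2\<^sup>2) \<le> d * (t + 1 - ln t) / 2"
    unfolding dim unfolding d_def by linarith
  then show ?thesis
    by (intro order_trans[OF Rem_le_gauss_posterior[OF lip r t]] add_mono mult_left_mono ennreal_leI) simp_all
qed

lemma exp_2_less: "exp (2 :: real) < 74 / 10"
proof -
  have "exp (2 :: real) = exp 1 * exp 1"
    by (simp add: exp_add[symmetric])
  also have "\<dots> < (272 / 100) * (272 / 100)"
    using e_less_272 by (intro mult_strict_mono) auto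
  finally show ?thesis by simp
qed

(* This t minimises the left-hand side. *)
lemma ln_bound_at_optimal_t:
  fixes a \<gamma> :: real
  assumes a: "0 \<le> a" and \<gamma>: "0 \<le> \<gamma>" "\<gamma> \<le> 3 / 2"
  defines "t \<equiv> 1 / (1 + 2 * \<gamma> * a)"
  shows "\<gamma> * t * a + (t + 1 - ln t) / 2 \<le> ln (3 + 3 * a)"
proof -
  have pos: "0 < 1 + 2 * \<gamma> * a"
    using a \<gamma> by (simp add: add_pos_nonneg)
  have "ln t = - ln (1 + 2 * \<gamma> * a)"
    using pos by (simp add: t_def ln_div)
  moreover have "\<gamma> * t * a + t / 2 = 1 / 2"
  proof -
    have "\<gamma> * t * a + t / 2 = t * (1 + 2 * \<gamma> * a) / 2"
      by (simp add: algebra_simps)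
    also have "\<dots> = 1 / 2"
      using pos by (simp add: t_def)
    finally show ?thesis .
  qed
  ultimately have "\<gamma> * t * a + (t + 1 - ln t) / 2 = 1 + ln (1 + 2 * \<gamma> * a) / 2"
    by (simp add: field_simps)
  also have "\<dots> \<le> ln (3 + 3 * a)"
  proof -
    have "exp 2 * (1 + 2 * \<gamma> * a) \<le> 74 / 10 * (1 + 3 * a)"
      using exp_2_less pos a \<gamma> by (intro mult_mono) (auto intro: mult_right_mono)
    also have "\<dots> \<le> (3 + 3 * a)\<^sup>2"
      using zero_le_power2[of "a - 7 / 30"] by (simp add: power2_eq_square algebra_simps)
    finally have "ln (exp 2 * (1 + 2 * \<gamma> * a)) \<le> ln ((3 + 3 * a)\<^sup>2)"
      using pos by (intro ln_mono) auto
    then show ?thesis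
      using pos a by (simp add: ln_mult ln_realpow)
  qed
  finally show ?thesis .
qed

lemma SUP_Rem_le:
  fixes X :: "(real^'n0) set" and \<mu> :: "(real^'n0) measure" and \<sigma> :: "real \<Rightarrow> real"
    and \<rho>1 \<rho>2 \<beta> C \<gamma> :: real and n :: nat
  defines "d \<equiv> real CARD('n0) * real CARD('n1) + real CARD('n1) * real CARD('n2)"
  defines "Wb \<equiv> {wb :: (real^'n1^'n0) \<times> (real^'n2^'n1).
    norm (fst wb) \<le> \<rho>1 * sqrt (2 * real CARD('n0) * real CARD('n1)) \<and>
    norm (snd wb) \<le> \<rho>2 * sqrt (2 * real CARD('n1) * real CARD('n2))}"
  assumes lip: "\<forall>u v. \<bar>\<sigma> u - \<sigma> v\<bar> \<le> \<bar>u - v\<bar>" and r: "0 < \<rho>1" "0 < \<rho>2"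
    and \<beta>: "0 < \<beta>" and n: "1 \<le> n" and C: "0 \<le> C" and \<gamma>: "0 \<le> \<gamma>" "\<gamma> \<le> 3 / 2"
    and risk: "\<And>t wb. 0 < t \<Longrightarrow> t \<le> 1 \<Longrightarrow> wb \<in> Wb \<Longrightarrow>
      (\<integral>\<^sup>+w. L2dist_sq \<mu> \<sigma> w wb \<partial>gauss_measure wb (pair_scale (sqrt t * \<rho>1) (sqrt t * \<rho>2)))
        \<le> ennreal (\<gamma> * t * C)"
  shows "(SUP wb\<in>Wb. Rem \<beta> n X \<mu> \<sigma> (gauss_prior \<rho>1 \<rho>2) wb)
    \<le> ennreal (\<beta> * d / real n * ln (3 + 3 * real n * C / (d * \<beta>)))"
proof (rule SUP_least)
  fix wb assume wb: "wb \<in> Wb"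
  define a where "a = real n * C / (\<beta> * d)"
  define t where "t = 1 / (1 + 2 * \<gamma> * a)"
  have d: "0 < d" unfolding d_def by (simp add: add_pos_pos)
  have a: "0 \<le> a" unfolding a_def using C \<beta> d by simp
  have t: "0 < t" "t \<le> 1" unfolding t_def using a \<gamma> by (simp_all add: add_pos_nonneg)
  have "Rem \<beta> n X \<mu> \<sigma> (gauss_prior \<rho>1 \<rho>2) wb \<le> ennreal (\<gamma> * t * C) + ennreal (\<beta> / real n) * ennreal (d * (t + 1 - ln t) / 2)"
    using wb unfolding Wb_def d_def
    by (intro order_trans[OF Rem_le_gauss_posterior_on_ball[OF lip r t(1)]] add_mono risk t wb) auto
  also have "\<dots> = ennreal (\<gamma> * t * C + \<beta> / real n * (d * (t + 1 - ln t) / 2))"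
  proof -
    have "0 \<le> \<beta> / real n" "0 \<le> d * (t + 1 - ln t) / 2" "0 \<le> \<gamma> * t * C"
      using \<beta> d C \<gamma> t ln_le_minus_one[OF t(1)] by simp_all
    then show ?thesis
      by (simp only: ennreal_mult[symmetric] ennreal_plus[symmetric] mult_nonneg_nonneg)
  qed
  also have "\<dots> = ennreal (\<beta> * d / real n * (\<gamma> * t * a + (t + 1 - ln t) / 2))"
    using \<beta> n d by (intro arg_cong[where f=ennreal]) (simp add: a_def field_simps)
  also have "\<dots> \<le> ennreal (\<beta> * d / real n * ln (3 + 3 * a))"
    unfolding t_def using \<beta> d n by (intro ennreal_leI mult_left_mono ln_bound_at_optimal_t a \<gamma>) auto
  finally show "Rem \<beta> n X \<mu> \<sigma> (gauss_prior \<rho>1 \<rho>2) wb \<le> ennreal (\<beta> * d / real n * ln (3 + 3 * real n * C / (d * \<beta>)))"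
    by (simp add: a_def ac_simps)
qed

lemma gauss_posterior_risk_bounded_activation:
  fixes \<mu> :: "(real^'n0) measure" and wb :: "(real^'n1^'n0) \<times> (real^'n2^'n1)" and M\<sigma> t :: real
  assumes lip: "\<forall>u v. \<bar>\<sigma> u - \<sigma> v\<bar> \<le> \<bar>u - v\<bar>"
    and \<mu>_sets: "sets \<mu> = sets (restrict_space borel X)" and \<mu>_sfin: "sigma_finite_measure \<mu>"
    and M2_fin: "(\<integral>\<^sup>+x. ennreal ((norm x)\<^sup>2) \<partial>\<mu>) < \<infinity>"
    and bounded: "\<forall>u. \<bar>\<sigma> u\<bar> \<le> M\<sigma>" and X_fin: "emeasure \<mu> X < \<infinity>"
    and r: "0 < \<rho>1" "0 < \<rho>2" and t: "0 < t"
    and w2: "norm (snd wb) \<le> \<rho>2 * sqrt (2 * real CARD('n1) * real CARD('n2))"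
  shows "(\<integral>\<^sup>+w. L2dist_sq \<mu> \<sigma> w wb \<partial>gauss_measure wb (pair_scale (sqrt t * \<rho>1) (sqrt t * \<rho>2)))
    \<le> ennreal (t * ((\<rho>2 * sqrt (2 * real CARD('n1) * real CARD('n2)))\<^sup>2
      * ((\<rho>1 * sqrt (2 * real CARD('n0) * real CARD('n1)))\<^sup>2 * M2sq \<mu> + enn2real (emeasure \<mu> X) * M\<sigma>\<^sup>2)))"
proof -
  define D0 D1 D2 where "D0 = real CARD('n0)" and "D1 = real CARD('n1)" and "D2 = real CARD('n2)"
  define V where "V = enn2real (emeasure \<mu> X)"
  have V: "emeasure \<mu> X = ennreal V" "0 \<le> V"
    using X_fin by (simp_all add: V_def less_top)
  have D: "0 < D0" "0 < D1" "0 < D2"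
    by (simp_all add: D0_def D1_def D2_def)
  have m2: "(norm (snd wb))\<^sup>2 \<le> \<rho>2\<^sup>2 * (2 * D1 * D2)"
    using power2_le_of_le_mult_sqrt[OF norm_ge_zero w2] by (simp add: D1_def D2_def)
  have "(\<integral>\<^sup>+w. L2dist_sq \<mu> \<sigma> w wb \<partial>gauss_measure wb (pair_scale (sqrt t * \<rho>1) (sqrt t * \<rho>2)))
      \<le> (\<integral>\<^sup>+x. ennreal (2 * D2 * (t * \<rho>2\<^sup>2) * (D1 * M\<sigma>\<^sup>2) + 0 * (norm (transpose (fst wb) *v x))\<^sup>2
        + 2 * (norm (snd wb))\<^sup>2 * D1 * (t * \<rho>1\<^sup>2) * (norm x)\<^sup>2) \<partial>\<mu>)"
  proof -
    have "(norm (sigbar \<sigma> z))\<^sup>2 \<le> D1 * M\<sigma>\<^sup>2 + 0 * (norm z)\<^sup>2" for z :: "real^'n1"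
      using power2_norm_sigbar_le_bound[OF bounded] by (simp add: D1_def)
    from nn_integral_L2dist_sq_gauss_le[OF lip \<mu>_sets \<mu>_sfin _ _ this, of "sqrt t * \<rho>1" "sqrt t * \<rho>2" wb]
    show ?thesis
      using r t by (simp add: power_mult_distrib D1_def D2_def mult_ac)
  qed
  also have "\<dots> \<le> ennreal (2 * D2 * (t * \<rho>2\<^sup>2) * (D1 * M\<sigma>\<^sup>2)) * emeasure \<mu> X
      + ennreal (0 * (Mbar2sq \<mu> * (norm (fst wb))\<^sup>2) + 2 * (norm (snd wb))\<^sup>2 * D1 * (t * \<rho>1\<^sup>2) * (D0 * M2sq \<mu>))"
    unfolding D0_def using D t by (intro nn_integral_quadratic_le[OF \<mu>_sets M2_fin]) simp_all
  also have "\<dots> = ennreal (2 * D2 * (t * \<rho>2\<^sup>2) * (D1 * M\<sigma>\<^sup>2) * V + 2 * (norm (snd wb))\<^sup>2 * D1 * (t * \<rho>1\<^sup>2) * (D0 * M2sq \<mu>))"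
    using V D t M2sq_nonneg[of \<mu>] by (simp add: ennreal_mult ennreal_plus)
  also have "\<dots> \<le> ennreal (t * (\<rho>2\<^sup>2 * (2 * D1 * D2) * (\<rho>1\<^sup>2 * (2 * D0 * D1) * M2sq \<mu> + V * M\<sigma>\<^sup>2)))"
  proof (rule ennreal_leI)
    have "2 * (norm (snd wb))\<^sup>2 * D1 * (t * \<rho>1\<^sup>2) * (D0 * M2sq \<mu>) \<le> 2 * (\<rho>2\<^sup>2 * (2 * D1 * D2)) * D1 * (t * \<rho>1\<^sup>2) * (D0 * M2sq \<mu>)"
      using m2 D t M2sq_nonneg[of \<mu>] by (intro mult_right_mono) (auto simp: mult_ac)
    then show "2 * D2 * (t * \<rho>2\<^sup>2) * (D1 * M\<sigma>\<^sup>2) * V + 2 * (norm (snd wb))\<^sup>2 * D1 * (t * \<rho>1\<^sup>2) * (D0 * M2sq \<mu>)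
        \<le> t * (\<rho>2\<^sup>2 * (2 * D1 * D2) * (\<rho>1\<^sup>2 * (2 * D0 * D1) * M2sq \<mu> + V * M\<sigma>\<^sup>2))"
      by (simp add: algebra_simps)
  qed
  finally show ?thesis
    using D by (simp add: power2_mult_sqrt D0_def D1_def D2_def V_def)
qed

lemma risk_constant_zero_at_origin_le:
  fixes D0 D1 D2 t \<rho>1 \<rho>2 M Mb n1 n2 :: real
  assumes D: "0 < D0" "1 \<le> D1" "0 < D2" and t: "0 < t" "t \<le> 1" and M: "0 \<le> M" "0 \<le> Mb"
    and n1: "n1 \<le> \<rho>1\<^sup>2 * (2 * D0 * D1)" and n2: "n2 \<le> \<rho>2\<^sup>2 * (2 * D1 * D2)"
  shows "2 * D2 * (t * \<rho>2\<^sup>2) * (Mb * n1)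
      + (2 * D2 * (t * \<rho>2\<^sup>2) * (D1 * (t * \<rho>1\<^sup>2)) + 2 * n2 * (D1 * (t * \<rho>1\<^sup>2))) * (D0 * M)
    \<le> 3 / 2 * t * (\<rho>1\<^sup>2 * (2 * D0 * D1) * (\<rho>2\<^sup>2 * (2 * D1 * D2)) * (M + Mb / D1))"
proof -
  define Q where "Q = t * \<rho>1\<^sup>2 * \<rho>2\<^sup>2 * D0 * D1 * D2"
  have Q: "0 \<le> Q"
    using t D unfolding Q_def by simp
  have "2 * D2 * (t * \<rho>2\<^sup>2) * (Mb * n1) \<le> 2 * D2 * (t * \<rho>2\<^sup>2) * (Mb * (\<rho>1\<^sup>2 * (2 * D0 * D1)))"
    using n1 M t D by (intro mult_left_mono) auto
  also have "\<dots> = 4 * Q * Mb"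
    by (simp add: Q_def)
  finally have A: "2 * D2 * (t * \<rho>2\<^sup>2) * (Mb * n1) \<le> 4 * Q * Mb" .
  \<comment> \<open>The term of order \<open>t\<^sup>2\<close> costs the extra factor \<open>3 / 2\<close>: here \<open>t \<le> 1 \<le> D1\<close> is used.\<close>
  have "2 * D2 * (t * \<rho>2\<^sup>2) * (D1 * (t * \<rho>1\<^sup>2)) * (D0 * M) = 2 * t * (Q * M)"
    by (simp add: Q_def)
  also have "\<dots> \<le> 2 * D1 * (Q * M)"
    using t D Q M by (intro mult_right_mono mult_left_mono) (auto simp: mult_nonneg_nonneg)
  finally have B: "2 * D2 * (t * \<rho>2\<^sup>2) * (D1 * (t * \<rho>1\<^sup>2)) * (D0 * M) \<le> 2 * D1 * (Q * M)" .
  have "2 * n2 * (D1 * (t * \<rho>1\<^sup>2)) * (D0 * M) \<le> 2 * (\<rho>2\<^sup>2 * (2 * D1 * D2)) * (D1 * (t * \<rho>1\<^sup>2)) * (D0 * M)"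
    using n2 D t M by (intro mult_right_mono) (auto simp: mult_ac)
  also have "\<dots> = 4 * D1 * (Q * M)"
    by (simp add: Q_def)
  finally have C: "2 * n2 * (D1 * (t * \<rho>1\<^sup>2)) * (D0 * M) \<le> 4 * D1 * (Q * M)" .
  have "3 / 2 * t * (\<rho>1\<^sup>2 * (2 * D0 * D1) * (\<rho>2\<^sup>2 * (2 * D1 * D2)) * (M + Mb / D1))
      = 6 * D1 * (Q * M) + 6 * Q * Mb"
    using D by (simp add: Q_def field_simps)
  then show ?thesis
    unfolding distrib_right using A B C mult_nonneg_nonneg[OF Q M(2)] by linarith
qed

lemma gauss_posterior_risk_zero_at_origin:
  fixes \<mu> :: "(real^'n0) measure" and wb :: "(real^'n1^'n0) \<times> (real^'n2^'n1)" and t :: real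
  assumes lip: "\<forall>u v. \<bar>\<sigma> u - \<sigma> v\<bar> \<le> \<bar>u - v\<bar>" and zero: "\<sigma> 0 = 0"
    and \<mu>_sets: "sets \<mu> = sets (restrict_space borel X)" and \<mu>_sfin: "sigma_finite_measure \<mu>"
    and M2_fin: "(\<integral>\<^sup>+x. ennreal ((norm x)\<^sup>2) \<partial>\<mu>) < \<infinity>"
    and r: "0 < \<rho>1" "0 < \<rho>2" and t: "0 < t" "t \<le> 1"
    and w1: "norm (fst wb) \<le> \<rho>1 * sqrt (2 * real CARD('n0) * real CARD('n1))"
    and w2: "norm (snd wb) \<le> \<rho>2 * sqrt (2 * real CARD('n1) * real CARD('n2))"
  shows "(\<integral>\<^sup>+w. L2dist_sq \<mu> \<sigma> w wb \<partial>gauss_measure wb (pair_scale (sqrt t * \<rho>1) (sqrt t * \<rho>2)))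
    \<le> ennreal (3 / 2 * t * ((\<rho>1 * sqrt (2 * real CARD('n0) * real CARD('n1)))\<^sup>2
      * (\<rho>2 * sqrt (2 * real CARD('n1) * real CARD('n2)))\<^sup>2 * (M2sq \<mu> + Mbar2sq \<mu> / real CARD('n1))))"
proof -
  define D0 D1 D2 where "D0 = real CARD('n0)" and "D1 = real CARD('n1)" and "D2 = real CARD('n2)"
  define b where "b = 2 * D2 * (t * \<rho>2\<^sup>2)"
  define c where "c = 2 * D2 * (t * \<rho>2\<^sup>2) * (D1 * (t * \<rho>1\<^sup>2)) + 2 * (norm (snd wb))\<^sup>2 * (D1 * (t * \<rho>1\<^sup>2))"
  have D: "0 < D0" "1 \<le> D1" "0 < D2"
    by (simp_all add: D0_def D1_def D2_def Suc_le_eq)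
  have m1: "(norm (fst wb))\<^sup>2 \<le> \<rho>1\<^sup>2 * (2 * D0 * D1)"
    using power2_le_of_le_mult_sqrt[OF norm_ge_zero w1] by (simp add: D0_def D1_def)
  have m2: "(norm (snd wb))\<^sup>2 \<le> \<rho>2\<^sup>2 * (2 * D1 * D2)"
    using power2_le_of_le_mult_sqrt[OF norm_ge_zero w2] by (simp add: D1_def D2_def)
  have "(\<integral>\<^sup>+w. L2dist_sq \<mu> \<sigma> w wb \<partial>gauss_measure wb (pair_scale (sqrt t * \<rho>1) (sqrt t * \<rho>2)))
      \<le> (\<integral>\<^sup>+x. ennreal (0 + b * (norm (transpose (fst wb) *v x))\<^sup>2 + c * (norm x)\<^sup>2) \<partial>\<mu>)"
  proof -
    have "(norm (sigbar \<sigma> z))\<^sup>2 \<le> 0 + 1 * (norm z)\<^sup>2" for z :: "real^'n1"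
      using norm_sigbar_le[OF lip zero, of z] by (simp add: power_mono)
    from nn_integral_L2dist_sq_gauss_le[OF lip \<mu>_sets \<mu>_sfin _ _ this, of "sqrt t * \<rho>1" "sqrt t * \<rho>2" wb]
    show ?thesis
      using r t by (simp add: power_mult_distrib b_def c_def D1_def D2_def algebra_simps)
  qed
  also have "\<dots> \<le> ennreal 0 * emeasure \<mu> X + ennreal (b * (Mbar2sq \<mu> * (norm (fst wb))\<^sup>2) + c * (D0 * M2sq \<mu>))"
    unfolding D0_def using D t by (intro nn_integral_quadratic_le[OF \<mu>_sets M2_fin]) (simp_all add: b_def c_def)
  also have "\<dots> \<le> ennreal (3 / 2 * t * (\<rho>1\<^sup>2 * (2 * D0 * D1) * (\<rho>2\<^sup>2 * (2 * D1 * D2)) * (M2sq \<mu> + Mbar2sq \<mu> / D1)))"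
    unfolding b_def c_def ennreal_0 mult_zero_left add_0_left
    by (intro ennreal_leI risk_constant_zero_at_origin_le[OF D t M2sq_nonneg Mbar2sq_nonneg m1 m2])
  finally show ?thesis
    using D by (simp add: power2_mult_sqrt D0_def D1_def D2_def)
qed

lemma SUP_Rem_le_bounded_activation:
  fixes X :: "(real^'n0) set" and \<mu> :: "(real^'n0) measure" and \<sigma> :: "real \<Rightarrow> real"
    and \<rho>1 \<rho>2 \<beta> M\<sigma> :: real and n :: nat
  defines "D0 \<equiv> real CARD('n0)" and "D1 \<equiv> real CARD('n1)" and "D2 \<equiv> real CARD('n2)"
  defines "d \<equiv> D0 * D1 + D1 * D2"
  defines "B1 \<equiv> \<rho>1 * sqrt (2 * D0 * D1)" and "B2 \<equiv> \<rho>2 * sqrt (2 * D1 * D2)"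
  assumes lip: "\<forall>u v. \<bar>\<sigma> u - \<sigma> v\<bar> \<le> \<bar>u - v\<bar>"
    and \<mu>_sets: "sets \<mu> = sets (restrict_space borel X)" and \<mu>_sfin: "sigma_finite_measure \<mu>"
    and M2_fin: "(\<integral>\<^sup>+x. ennreal ((norm x)\<^sup>2) \<partial>\<mu>) < \<infinity>"
    and r: "0 < \<rho>1" "0 < \<rho>2" and \<beta>: "0 < \<beta>" and n: "1 \<le> n"
    and bounded: "\<forall>u. \<bar>\<sigma> u\<bar> \<le> M\<sigma>" and X_fin: "emeasure \<mu> X < \<infinity>"
  shows "(SUP wb\<in>{wb :: (real^'n1^'n0) \<times> (real^'n2^'n1). norm (fst wb) \<le> B1 \<and> norm (snd wb) \<le> B2}.
      Rem \<beta> n X \<mu> \<sigma> (gauss_prior \<rho>1 \<rho>2) wb)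
    \<le> ennreal (\<beta> * d / real n * ln (3 + 3 * real n * B2\<^sup>2
      * (B1\<^sup>2 * M2sq \<mu> + enn2real (emeasure \<mu> X) * M\<sigma>\<^sup>2) / (d * \<beta>)))"
proof -
  have "(SUP wb\<in>{wb :: (real^'n1^'n0) \<times> (real^'n2^'n1). norm (fst wb) \<le> B1 \<and> norm (snd wb) \<le> B2}.
      Rem \<beta> n X \<mu> \<sigma> (gauss_prior \<rho>1 \<rho>2) wb)
    \<le> ennreal (\<beta> * d / real n * ln (3 + 3 * real n
      * (B2\<^sup>2 * (B1\<^sup>2 * M2sq \<mu> + enn2real (emeasure \<mu> X) * M\<sigma>\<^sup>2)) / (d * \<beta>)))"
    unfolding d_def B1_def B2_def D0_def D1_def D2_def
  proof (rule SUP_Rem_le[OF lip r \<beta> n, where \<gamma>=1])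
    fix t :: real and wb :: "(real^'n1^'n0) \<times> (real^'n2^'n1)"
    assume "0 < t" "t \<le> 1" "wb \<in> {wb. norm (fst wb) \<le> \<rho>1 * sqrt (2 * real CARD('n0) * real CARD('n1))
      \<and> norm (snd wb) \<le> \<rho>2 * sqrt (2 * real CARD('n1) * real CARD('n2))}"
    then show "(\<integral>\<^sup>+w. L2dist_sq \<mu> \<sigma> w wb \<partial>gauss_measure wb (pair_scale (sqrt t * \<rho>1) (sqrt t * \<rho>2)))
        \<le> ennreal (1 * t * ((\<rho>2 * sqrt (2 * real CARD('n1) * real CARD('n2)))\<^sup>2 *
          ((\<rho>1 * sqrt (2 * real CARD('n0) * real CARD('n1)))\<^sup>2 * M2sq \<mu> + enn2real (emeasure \<mu> X) * M\<sigma>\<^sup>2)))"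
      unfolding mult_1_left
      by (intro gauss_posterior_risk_bounded_activation[OF lip \<mu>_sets \<mu>_sfin M2_fin bounded X_fin r]) auto
  qed (simp_all add: M2sq_nonneg)
  then show ?thesis
    by (simp add: mult.assoc)
qed

lemma SUP_Rem_le_zero_at_origin:
  fixes X :: "(real^'n0) set" and \<mu> :: "(real^'n0) measure" and \<sigma> :: "real \<Rightarrow> real"
    and \<rho>1 \<rho>2 \<beta> :: real and n :: nat
  defines "D0 \<equiv> real CARD('n0)" and "D1 \<equiv> real CARD('n1)" and "D2 \<equiv> real CARD('n2)"
  defines "d \<equiv> D0 * D1 + D1 * D2"
  defines "B1 \<equiv> \<rho>1 * sqrt (2 * D0 * D1)" and "B2 \<equiv> \<rho>2 * sqrt (2 * D1 * D2)"
  assumes lip: "\<forall>u v. \<bar>\<sigma> u - \<sigma> v\<bar> \<le> \<bar>u - v\<bar>" and zero: "\<sigma> 0 = 0"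
    and \<mu>_sets: "sets \<mu> = sets (restrict_space borel X)" and \<mu>_sfin: "sigma_finite_measure \<mu>"
    and M2_fin: "(\<integral>\<^sup>+x. ennreal ((norm x)\<^sup>2) \<partial>\<mu>) < \<infinity>"
    and r: "0 < \<rho>1" "0 < \<rho>2" and \<beta>: "0 < \<beta>" and n: "1 \<le> n"
  shows "(SUP wb\<in>{wb :: (real^'n1^'n0) \<times> (real^'n2^'n1). norm (fst wb) \<le> B1 \<and> norm (snd wb) \<le> B2}.
      Rem \<beta> n X \<mu> \<sigma> (gauss_prior \<rho>1 \<rho>2) wb)
    \<le> ennreal (\<beta> * d / real n * ln (3 + 3 * real n * B1\<^sup>2 * B2\<^sup>2
      * (M2sq \<mu> + Mbar2sq \<mu> / D1) / (d * \<beta>)))"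
proof -
  have "(SUP wb\<in>{wb :: (real^'n1^'n0) \<times> (real^'n2^'n1). norm (fst wb) \<le> B1 \<and> norm (snd wb) \<le> B2}.
      Rem \<beta> n X \<mu> \<sigma> (gauss_prior \<rho>1 \<rho>2) wb)
    \<le> ennreal (\<beta> * d / real n * ln (3 + 3 * real n
      * (B1\<^sup>2 * B2\<^sup>2 * (M2sq \<mu> + Mbar2sq \<mu> / D1)) / (d * \<beta>)))"
    unfolding d_def B1_def B2_def D0_def D1_def D2_def
  proof (rule SUP_Rem_le[OF lip r \<beta> n, where \<gamma>="3 / 2"])
    fix t :: real and wb :: "(real^'n1^'n0) \<times> (real^'n2^'n1)"
    assume "0 < t" "t \<le> 1" "wb \<in> {wb. norm (fst wb) \<le> \<rho>1 * sqrt (2 * real CARD('n0) * real CARD('n1))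
      \<and> norm (snd wb) \<le> \<rho>2 * sqrt (2 * real CARD('n1) * real CARD('n2))}"
    then show "(\<integral>\<^sup>+w. L2dist_sq \<mu> \<sigma> w wb \<partial>gauss_measure wb (pair_scale (sqrt t * \<rho>1) (sqrt t * \<rho>2)))
        \<le> ennreal (3 / 2 * t * ((\<rho>1 * sqrt (2 * real CARD('n0) * real CARD('n1)))\<^sup>2
          * (\<rho>2 * sqrt (2 * real CARD('n1) * real CARD('n2)))\<^sup>2 * (M2sq \<mu> + Mbar2sq \<mu> / real CARD('n1))))"
      by (intro gauss_posterior_risk_zero_at_origin[OF lip zero \<mu>_sets \<mu>_sfin M2_fin r]) auto
  qed (simp_all add: M2sq_nonneg Mbar2sq_nonneg)
  then show ?thesis
    by (simp add: mult.assoc)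
qed

theorem corollary1:
  fixes X :: "(real^'n0) set" and \<mu> :: "(real^'n0) measure"
    and \<sigma> :: "real \<Rightarrow> real" and \<rho>1 \<rho>2 \<beta> M\<sigma> :: real and n :: nat
  defines "D0 \<equiv> real CARD('n0)" and "D1 \<equiv> real CARD('n1)" and "D2 \<equiv> real CARD('n2)"
  defines "d \<equiv> D0 * D1 + D1 * D2"
  defines "B1 \<equiv> \<rho>1 * sqrt (2 * D0 * D1)" and "B2 \<equiv> \<rho>2 * sqrt (2 * D1 * D2)"
  defines "\<pi> \<equiv> (gauss_prior \<rho>1 \<rho>2 :: ((real^'n1^'n0) \<times> (real^'n2^'n1)) measure)"
  defines "Wb \<equiv> {wb :: (real^'n1^'n0) \<times> (real^'n2^'n1). norm (fst wb) \<le> B1 \<and> norm (snd wb) \<le> B2}"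
  assumes X_borel: "X \<in> sets borel"
    and mu_sets: "sets \<mu> = sets (restrict_space borel X)"
    and mu_sfin: "sigma_finite_measure \<mu>"
    and M2_fin: "(\<integral>\<^sup>+ x. ennreal ((norm x)\<^sup>2) \<partial>\<mu>) < \<infinity>"
    and lip: "\<forall>u v. \<bar>\<sigma> u - \<sigma> v\<bar> \<le> \<bar>u - v\<bar>"
    and rho: "\<rho>1 > 0" "\<rho>2 > 0"
    and beta: "\<beta> > 0" and n: "n \<ge> 1"
  shows "((\<forall>u. \<bar>\<sigma> u\<bar> \<le> M\<sigma>) \<and> emeasure \<mu> X < \<infinity> \<longrightarrow>
            (SUP wb\<in>Wb. Rem \<beta> n X \<mu> \<sigma> \<pi> wb)
              \<le> ennreal (\<beta> * d / real n * ln (3 + 3 * real n * B2\<^sup>2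
                    * (B1\<^sup>2 * M2sq \<mu> + enn2real (emeasure \<mu> X) * M\<sigma>\<^sup>2) / (d * \<beta>))))
       \<and> (\<not> bounded (range \<sigma>) \<and> \<sigma> 0 = 0 \<longrightarrow>
            (SUP wb\<in>Wb. Rem \<beta> n X \<mu> \<sigma> \<pi> wb)
              \<le> ennreal (\<beta> * d / real n * ln (3 + 3 * real n * B1\<^sup>2 * B2\<^sup>2
                    * (M2sq \<mu> + Mbar2sq \<mu> / D1) / (d * \<beta>))))"
  using SUP_Rem_le_bounded_activation[OF lip mu_sets mu_sfin M2_fin rho beta n]
    SUP_Rem_le_zero_at_origin[OF lip _ mu_sets mu_sfin M2_fin rho beta n]
  unfolding Wb_def \<pi>_def d_def B1_def B2_def D0_def D1_def D2_def by blast

end
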